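(* Let $K$ be a non-archimedean local field, $V$ a finite-dimensional $K$-vector space, $\mathcal S$ the space of equivalence classes of seminorms on $V$ (which is homeomorphic to the compactification $\overline X$ of the Bruhat–Tits building of $PGL(V)$), and ${\mathbb P}(V)^{an}$ the Berkovich analytic projective space. Let $r:{\mathbb P}(V)^{an}\to\mathcal S$ and $j:\mathcal S\to{\mathbb P}(V)^{an}$ be the maps defined in the context. Then $r$ and $j$ are continuous and $r\circ j=\mathrm{id}_{\mathcal S}$. Moreover, $j$ is a homeomorphism from $\mathcal S$ onto its image $j(\mathcal S)$, which is a closed subset of ${\mathbb P}(V)^{an}$.
   Context: $|\cdot|$ is the absolute value of $K$. A seminorm on $V$ is a map $\gamma:V\to\mathbb R_{\ge0}$, not identically zero, with $\gamma(\lambda x)=|\lambda|\gamma(x)$ and $\gamma(x+y)\le\max\{\gamma(x),\gamma(y)\}$; two seminorms are equivalent if they differ by a positive constant factor; $\mathcal S$ is the set of equivalence classes, with the quotient topology of the topology of pointwise convergence on seminorms. Every seminorm is canonical with respect to some basis $w_1,\dots,w_n$ of $V$, i.e. $\gamma(\sum\lambda_iw_i)=\max_i|\lambda_i|\gamma(w_i)$. ${\mathbb P}(V)=\mathrm{Proj}\,\mathrm{Sym}\,V$, and ${\mathbb P}(V)^{an}$ is its Berkovich analytic space, identified with the set of equivalence classes of multiplicative seminorms on the polynomial ring $\mathrm{Sym}\,V$ extending the absolute value of $K$ and not vanishing identically on $V$, where $\alpha,\beta$ are equivalent iff there is $c>0$ with $\alpha(f)=c^d\beta(f)$ for all homogeneous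 $f$ of degree $d$; it carries the Berkovich topology. The map $r$ sends the class of $\alpha$ to the class of the restriction $\alpha|_V$. The map $j$ sends the class of a seminorm $\gamma$, canonical with respect to a basis $w_1,\dots,w_n$, to the class of the multiplicative seminorm $\alpha(\sum_\nu a_\nu w_1^{\nu_1}\cdots w_n^{\nu_n})=\max_\nu |a_\nu|\gamma(w_1)^{\nu_1}\cdots\gamma(w_n)^{\nu_n}$ (this is well defined). Both maps are $PGL(V)$-equivariant. *)

theory Defs
  imports "HOL-Analysis.Analysis" "HOL-Library.Poly_Mapping"
begin

text \<open>A non-archimedean local field: a field with a nontrivial non-archimedean
absolute value whose closed unit ball is (sequentially) compact for the metric
induced by the absolute value (equivalently: locally compact, complete, discretely
valued with finite residue field).\<close>

definition nonarch_local_field :: "('k::field \<Rightarrow> real) \<Rightarrow> bool" where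
  "nonarch_local_field absK \<longleftrightarrow>
     (\<forall>x. absK x \<ge> 0) \<and> (\<forall>x. absK x = 0 \<longleftrightarrow> x = 0) \<and>
     (\<forall>x y. absK (x * y) = absK x * absK y) \<and>
     (\<forall>x y. absK (x + y) \<le> max (absK x) (absK y)) \<and>
     (\<exists>x. absK x \<noteq> 0 \<and> absK x \<noteq> 1) \<and>
     (\<forall>s::nat \<Rightarrow> 'k. (\<forall>m. absK (s m) \<le> 1) \<longrightarrow>
        (\<exists>l h. absK l \<le> 1 \<and> strict_mono h \<and>
               (\<lambda>m. absK (s (h m) - l)) \<longlonglongrightarrow> 0))"

text \<open>V is modelled as 'n \<Rightarrow> 'k for a finite index type 'n (n = CARD('n)).\<close>

definition vsmul :: "'k::field \<Rightarrow> ('n \<Rightarrow> 'k) \<Rightarrow> ('n \<Rightarrow> 'k)" where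
  "vsmul c v = (\<lambda>i. c * v i)"

definition vadd :: "('n \<Rightarrow> 'k::field) \<Rightarrow> ('n \<Rightarrow> 'k) \<Rightarrow> ('n \<Rightarrow> 'k)" where
  "vadd v w = (\<lambda>i. v i + w i)"

definition lincomb :: "('n::finite \<Rightarrow> 'k::field) \<Rightarrow> ('n \<Rightarrow> ('n \<Rightarrow> 'k)) \<Rightarrow> ('n \<Rightarrow> 'k)" where
  "lincomb l w = (\<lambda>i. \<Sum>j\<in>UNIV. l j * w j i)"

definition is_basis :: "('n::finite \<Rightarrow> ('n \<Rightarrow> 'k::field)) \<Rightarrow> bool" where
  "is_basis w \<longleftrightarrow> (\<forall>v. \<exists>!l. lincomb l w = v)"

definition seminorm :: "('k::field \<Rightarrow> real) \<Rightarrow> (('n \<Rightarrow> 'k) \<Rightarrow> real) \<Rightarrow> bool" where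
  "seminorm absK \<gamma> \<longleftrightarrow>
     (\<forall>x. \<gamma> x \<ge> 0) \<and> (\<exists>x. \<gamma> x \<noteq> 0) \<and>
     (\<forall>c x. \<gamma> (vsmul c x) = absK c * \<gamma> x) \<and>
     (\<forall>x y. \<gamma> (vadd x y) \<le> max (\<gamma> x) (\<gamma> y))"

definition canonical_wrt ::
  "('k::field \<Rightarrow> real) \<Rightarrow> (('n::finite \<Rightarrow> 'k) \<Rightarrow> real) \<Rightarrow> ('n \<Rightarrow> ('n \<Rightarrow> 'k)) \<Rightarrow> bool" where
  "canonical_wrt absK \<gamma> w \<longleftrightarrow>
     is_basis w \<and> (\<forall>l. \<gamma> (lincomb l w) = (MAX i\<in>UNIV. absK (l i) * \<gamma> (w i)))"

definition seminorm_class :: "('k::field \<Rightarrow> real) \<Rightarrow> (('n \<Rightarrow> 'k) \<Rightarrow> real) \<Rightarrow> (('n \<Rightarrow> 'k) \<Rightarrow> real) set" where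
  "seminorm_class absK \<gamma> = {\<delta>. seminorm absK \<delta> \<and> (\<exists>c>0. \<forall>x. \<delta> x = c * \<gamma> x)}"

definition quotient_topology :: "'a topology \<Rightarrow> ('a \<Rightarrow> 'b) \<Rightarrow> 'b topology" where
  "quotient_topology X f =
     topology (\<lambda>U. U \<subseteq> f ` topspace X \<and> openin X {x \<in> topspace X. f x \<in> U})"

definition seminorm_top :: "('k::field \<Rightarrow> real) \<Rightarrow> (('n \<Rightarrow> 'k) \<Rightarrow> real) topology" where
  "seminorm_top absK = subtopology (product_topology (\<lambda>_. euclideanreal) UNIV) {\<gamma>. seminorm absK \<gamma>}"

definition S_top :: "('k::field \<Rightarrow> real) \<Rightarrow> (('n \<Rightarrow> 'k) \<Rightarrow> real) set topology" where
  "S_top absK = quotient_topology (seminorm_top absK) (seminorm_class absK)"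

type_synonym ('n, 'k) sympoly = "('n \<Rightarrow>\<^sub>0 nat) \<Rightarrow>\<^sub>0 'k"

definition pconst :: "'k::field \<Rightarrow> ('n, 'k) sympoly" where
  "pconst c = Poly_Mapping.single 0 c"

definition pvar :: "'n \<Rightarrow> ('n, 'k::field) sympoly" where
  "pvar i = Poly_Mapping.single (Poly_Mapping.single i 1) 1"

definition lin :: "('n::finite \<Rightarrow> 'k::field) \<Rightarrow> ('n, 'k) sympoly" where
  "lin v = (\<Sum>i\<in>UNIV. pconst (v i) * pvar i)"

definition mdeg :: "('n::finite \<Rightarrow>\<^sub>0 nat) \<Rightarrow> nat" where
  "mdeg \<nu> = (\<Sum>i\<in>UNIV. Poly_Mapping.lookup \<nu> i)"

definition homogeneous :: "nat \<Rightarrow> ('n::finite, 'k::field) sympoly \<Rightarrow> bool" where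
  "homogeneous d f \<longleftrightarrow> (\<forall>\<nu>\<in>Poly_Mapping.keys f. mdeg \<nu> = d)"

definition mult_seminorm :: "('k::field \<Rightarrow> real) \<Rightarrow> (('n::finite, 'k) sympoly \<Rightarrow> real) \<Rightarrow> bool" where
  "mult_seminorm absK \<alpha> \<longleftrightarrow>
     (\<forall>f. \<alpha> f \<ge> 0) \<and>
     (\<forall>f g. \<alpha> (f + g) \<le> \<alpha> f + \<alpha> g) \<and>
     (\<forall>f g. \<alpha> (f * g) = \<alpha> f * \<alpha> g) \<and>
     (\<forall>c. \<alpha> (pconst c) = absK c) \<and>
     (\<exists>v. \<alpha> (lin v) \<noteq> 0)"

definition mult_class ::
  "('k::field \<Rightarrow> real) \<Rightarrow> (('n::finite, 'k) sympoly \<Rightarrow> real) \<Rightarrow> (('n, 'k) sympoly \<Rightarrow> real) set" where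
  "mult_class absK \<alpha> = {\<beta>. mult_seminorm absK \<beta> \<and>
      (\<exists>c>0. \<forall>d f. homogeneous d f \<longrightarrow> \<beta> f = c ^ d * \<alpha> f)}"

definition mult_seminorm_top ::
  "('k::field \<Rightarrow> real) \<Rightarrow> (('n::finite, 'k) sympoly \<Rightarrow> real) topology" where
  "mult_seminorm_top absK =
     subtopology (product_topology (\<lambda>_. euclideanreal) UNIV) {\<alpha>. mult_seminorm absK \<alpha>}"

text \<open>P(V)^an with its Berkovich topology, realised as the quotient of the space of
multiplicative seminorms (pointwise convergence) by the scaling equivalence.\<close>

definition Pan_top ::
  "('k::field \<Rightarrow> real) \<Rightarrow> (('n::finite, 'k) sympoly \<Rightarrow> real) set topology" where
  "Pan_top absK = quotient_topology (mult_seminorm_top absK) (mult_class absK)"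

definition r_map ::
  "('k::field \<Rightarrow> real) \<Rightarrow> (('n::finite, 'k) sympoly \<Rightarrow> real) set \<Rightarrow> (('n \<Rightarrow> 'k) \<Rightarrow> real) set" where
  "r_map absK A = (\<Union>\<alpha>\<in>A. seminorm_class absK (\<alpha> \<circ> lin))"

text \<open>Substitution X_i \<mapsto> w_i: the K-algebra map Sym V \<rightarrow> Sym V sending the i-th
variable to the basis vector w i; thus f = subst w g means f = \<Sum>\<nu> a_\<nu> w^\<nu>.\<close>

definition subst :: "('n::finite \<Rightarrow> ('n \<Rightarrow> 'k::field)) \<Rightarrow> ('n, 'k) sympoly \<Rightarrow> ('n, 'k) sympoly" where
  "subst w g = (\<Sum>\<nu>\<in>Poly_Mapping.keys g. pconst (Poly_Mapping.lookup g \<nu>) * (\<Prod>i\<in>UNIV. lin (w i) ^ Poly_Mapping.lookup \<nu> i))"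

definition gauss :: "('k::field \<Rightarrow> real) \<Rightarrow> ('n::finite \<Rightarrow> real) \<Rightarrow> ('n, 'k) sympoly \<Rightarrow> real" where
  "gauss absK \<rho> g = Max ({absK (Poly_Mapping.lookup g \<nu>) * (\<Prod>i\<in>UNIV. \<rho> i ^ Poly_Mapping.lookup \<nu> i) | \<nu>. \<nu> \<in> Poly_Mapping.keys g} \<union> {0})"

text \<open>The multiplicative seminorm attached to \<gamma> canonical w.r.t. the basis w:
 \<alpha>(\<Sum> a_\<nu> w^\<nu>) = max |a_\<nu>| \<gamma>(w_1)^\<nu>_1 ... \<gamma>(w_n)^\<nu>_n.\<close>

definition j_rep ::
  "('k::field \<Rightarrow> real) \<Rightarrow> (('n::finite \<Rightarrow> 'k) \<Rightarrow> real) \<Rightarrow> ('n \<Rightarrow> ('n \<Rightarrow> 'k)) \<Rightarrow> ('n, 'k) sympoly \<Rightarrow> real" where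
  "j_rep absK \<gamma> w f = gauss absK (\<lambda>i. \<gamma> (w i)) (THE g. subst w g = f)"

definition j_map ::
  "('k::field \<Rightarrow> real) \<Rightarrow> (('n::finite \<Rightarrow> 'k) \<Rightarrow> real) set \<Rightarrow> (('n, 'k) sympoly \<Rightarrow> real) set" where
  "j_map absK C = (\<Union>\<gamma>\<in>C. \<Union>w\<in>{w. canonical_wrt absK \<gamma> w}. mult_class absK (j_rep absK \<gamma> w))"

end

(* The key input is that every seminorm \<gamma> on V = K^n admits a basis w that is orthogonal
   for \<gamma> and, simultaneously, for the sup norm (Goldman--Iwahori). It is built one vector at a
   time: minimise \<gamma> on a unit sphere, which is possible because K is locally compact, and
   recurse on the seminorm induced on the quotient by that vector.

   The Gauss norm in w-coordinates is a multiplicative seminorm j(\<gamma>) on Sym V restricting to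
   \<gamma> on V, whence r \<circ> j = id. Every multiplicative seminorm restricting to \<gamma> is bounded by
   the Gauss norm in any coordinates, so j(\<gamma>) f is the minimum of these Gauss norms over all
   bases. This makes j(\<gamma>) independent of w, and it gives continuity: comparing the Gauss norms
   of two nearby seminorms in a basis adapted to one of them only involves their values on the
   unit ball, where pointwise convergence of seminorms is uniform because the unit ball of K is
   totally bounded. Finally, the image of j consists of the classes of those \<alpha> that agree on
   homogeneous elements with j applied to their restriction to V, a closed condition. *)

theory Submission
  imports Defs
begin

section \<open>Non-archimedean local fields\<close>

locale local_field =
  fixes absK :: "'k::field \<Rightarrow> real"
  assumes nonarch_local_field: "nonarch_local_field absK"
begin

lemma absK_nonneg [simp]: "0 \<le> absK x"
  using nonarch_local_field by (simp add: nonarch_local_field_def)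

lemma absK_eq_0_iff [simp]: "absK x = 0 \<longleftrightarrow> x = 0"
  using nonarch_local_field by (simp add: nonarch_local_field_def)

lemma absK_mult [simp]: "absK (x * y) = absK x * absK y"
  using nonarch_local_field by (simp add: nonarch_local_field_def)

lemma absK_ultra: "absK (x + y) \<le> max (absK x) (absK y)"
  using nonarch_local_field by (simp add: nonarch_local_field_def)

lemma absK_nontrivial: "\<exists>x. absK x \<noteq> 0 \<and> absK x \<noteq> 1"
  using nonarch_local_field by (simp add: nonarch_local_field_def)

lemma unit_ball_seq_compact:
  fixes s :: "nat \<Rightarrow> 'k"
  assumes "\<And>m. absK (s m) \<le> 1"
  shows "\<exists>l h. absK l \<le> 1 \<and> strict_mono h \<and> (\<lambda>m. absK (s (h m) - l)) \<longlonglongrightarrow> 0"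
  using nonarch_local_field assms by (simp add: nonarch_local_field_def)

lemma absK_0 [simp]: "absK 0 = 0"
  by simp

lemma absK_pos_iff [simp]: "0 < absK x \<longleftrightarrow> x \<noteq> 0"
  using absK_nonneg[of x] absK_eq_0_iff[of x] by linarith

lemma absK_1 [simp]: "absK 1 = 1"
proof -
  have "absK 1 * (absK 1 - 1) = 0" using absK_mult[of 1 1] by (simp add: algebra_simps)
  then show ?thesis by simp
qed

lemma absK_minus [simp]: "absK (- x) = absK x"
proof -
  have "(absK (-1) - 1) * (absK (-1) + 1) = 0"
    using absK_mult[of "-1" "-1"] by (simp add: algebra_simps)
  moreover have "absK (-1) + 1 \<noteq> 0" using absK_nonneg[of "-1"] by linarith
  ultimately have "absK (-1) = 1" by simp
  then show ?thesis using absK_mult[of "-1" x] by simp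
qed

lemma absK_minus_commute: "absK (x - y) = absK (y - x)"
  using absK_minus[of "y - x"] by simp

lemma absK_inverse [simp]: "absK (inverse x) = inverse (absK x)"
proof (cases "x = 0")
  case False
  then have "absK x * absK (inverse x) = 1" using absK_mult[of x "inverse x"] by simp
  then show ?thesis by (simp add: inverse_unique)
qed simp

lemma absK_divide [simp]: "absK (x / y) = absK x / absK y"
  by (simp add: divide_inverse)

lemma absK_power [simp]: "absK (x ^ n) = absK x ^ n"
  by (induction n) auto

lemma absK_diff_le: "absK (x - y) \<le> max (absK x) (absK y)"
  using absK_ultra[of x "- y"] by simp

lemma absK_add_eq_left: "absK y < absK x \<Longrightarrow> absK (x + y) = absK x"
  using absK_ultra[of x y] absK_diff_le[of "x + y" y] by (auto simp: max_def split: if_splits)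

lemma absK_add_absorb: "absK c \<le> m \<Longrightarrow> max (absK (a + c)) m = max (absK a) m"
  using absK_ultra[of a c] absK_diff_le[of "a + c" c] by (auto simp: max_def split: if_splits)

lemma absK_sum_le: "finite S \<Longrightarrow> (\<And>i. i \<in> S \<Longrightarrow> absK (f i) \<le> M) \<Longrightarrow> 0 \<le> M \<Longrightarrow> absK (sum f S) \<le> M"
  by (induction S rule: finite_induct) (auto intro: order_trans[OF absK_ultra])

lemma absK_sum_less: "finite S \<Longrightarrow> (\<And>i. i \<in> S \<Longrightarrow> absK (f i) < T) \<Longrightarrow> 0 < T \<Longrightarrow> absK (sum f S) < T"
  by (induction S rule: finite_induct) (auto intro: le_less_trans[OF absK_ultra])

lemma absK_of_nat_le_1: "absK (of_nat n) \<le> 1"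
  by (induction n) (auto intro: order_trans[OF absK_ultra])

lemma exists_absK_gt: "\<exists>c. R < absK c"
proof -
  obtain x where x: "absK x \<noteq> 0" "absK x \<noteq> 1" using absK_nontrivial by blast
  define q where "q = (if absK x > 1 then x else inverse x)"
  have "absK q > 1"
    using x absK_nonneg[of x] unfolding q_def by (auto simp: one_less_inverse)
  then obtain n where "R < absK q ^ n" using real_arch_pow by blast
  then have "R < absK (q ^ n)" by simp
  then show ?thesis ..
qed

lemma bounded_seq_convergent_subseq:
  fixes s :: "nat \<Rightarrow> 'k"
  assumes "\<And>m. absK (s m) \<le> R"
  shows "\<exists>l h. absK l \<le> R \<and> strict_mono h \<and> (\<lambda>m. absK (s (h m) - l)) \<longlonglongrightarrow> 0"
proof -
  obtain c where c: "R < absK c" using exists_absK_gt by blast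
  have "0 \<le> R" using assms[of 0] absK_nonneg[of "s 0"] by linarith
  with c have "c \<noteq> 0" by auto
  have "absK (s m / c) \<le> 1" for m
    using assms[of m] c \<open>c \<noteq> 0\<close> by (simp add: pos_divide_le_eq)
  then obtain l h where lh: "absK l \<le> 1" "strict_mono h" "(\<lambda>m. absK (s (h m) / c - l)) \<longlonglongrightarrow> 0"
    using unit_ball_seq_compact[of "\<lambda>m. s m / c"] by blast
  have "s (h m) - c * l = c * (s (h m) / c - l)" for m
    using \<open>c \<noteq> 0\<close> by (simp add: field_simps)
  then have "absK (s (h m) - c * l) = absK c * absK (s (h m) / c - l)" for m
    by simp
  then have lim: "(\<lambda>m. absK (s (h m) - c * l)) \<longlonglongrightarrow> 0"
    using tendsto_mult_right_zero[OF lh(3)] by simp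
  have "absK (c * l) \<le> R"
  proof (rule ccontr)
    assume far: "\<not> absK (c * l) \<le> R"
    then have "eventually (\<lambda>m. absK (s (h m) - c * l) < absK (c * l) - R) sequentially"
      using lim by (intro order_tendstoD(2)) auto
    then obtain m where m: "absK (s (h m) - c * l) < absK (c * l) - R"
      by (auto simp: eventually_sequentially)
    have "absK (c * l) \<le> max (absK (s (h m))) (absK (s (h m) - c * l))"
      using absK_diff_le[of "s (h m)" "s (h m) - c * l"] by simp
    then show False using m assms[of "h m"] far \<open>0 \<le> R\<close> by (auto simp: max_def split: if_splits)
  qed
  with lh(2) lim show ?thesis by blast
qed

end

section \<open>Non-archimedean seminorms on V\<close>

definition max0 :: "'a set \<Rightarrow> ('a \<Rightarrow> real) \<Rightarrow> real" where
  "max0 I f = Max (insert 0 (f ` I))"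

lemma max0_ge: "finite I \<Longrightarrow> j \<in> I \<Longrightarrow> f j \<le> max0 I f"
  unfolding max0_def by (rule Max_ge) auto

lemma max0_nonneg: "finite I \<Longrightarrow> 0 \<le> max0 I f"
  unfolding max0_def by (rule Max_ge) auto

lemma max0_least: "finite I \<Longrightarrow> (\<And>j. j \<in> I \<Longrightarrow> f j \<le> M) \<Longrightarrow> 0 \<le> M \<Longrightarrow> max0 I f \<le> M"
  unfolding max0_def by (rule Max.boundedI) auto

lemma max0_attained: "finite I \<Longrightarrow> max0 I f = 0 \<or> (\<exists>j\<in>I. max0 I f = f j)"
  using Max_in[of "insert 0 (f ` I)"] unfolding max0_def by auto

lemma max0_empty [simp]: "max0 {} f = 0"
  unfolding max0_def by simp

lemma max0_insert:
  assumes "finite I"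
  shows "max0 (insert p I) f = max (f p) (max0 I f)"
proof (rule antisym)
  show "max0 (insert p I) f \<le> max (f p) (max0 I f)"
    using assms by (intro max0_least) (auto intro: max0_ge max0_nonneg max.coboundedI2)
  show "max (f p) (max0 I f) \<le> max0 (insert p I) f"
    using assms by (auto intro!: max0_ge max0_least max0_nonneg)
qed

lemma max0_mono: "finite I \<Longrightarrow> (\<And>j. j \<in> I \<Longrightarrow> f j \<le> g j) \<Longrightarrow> max0 I f \<le> max0 I g"
  by (rule max0_least) (auto intro: max0_ge max0_nonneg order_trans)

lemma max0_eq_Max:
  assumes "finite I" "I \<noteq> {}" "\<And>j. j \<in> I \<Longrightarrow> 0 \<le> f j"
  shows "max0 I f = (MAX j\<in>I. f j)"
proof -
  obtain j where "j \<in> I" using assms(2) by blast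
  then have "0 \<le> (MAX j\<in>I. f j)" using assms by (meson Max_ge finite_imageI image_eqI order_trans)
  then show ?thesis using assms
    by (intro antisym max0_least Max.boundedI) (auto intro: max0_ge)
qed

lemma max0_mult_left:
  assumes "finite I" "0 \<le> c"
  shows "max0 I (\<lambda>j. c * f j) = c * max0 I f"
proof (rule antisym)
  show "max0 I (\<lambda>j. c * f j) \<le> c * max0 I f"
    using assms by (intro max0_least) (auto intro: mult_left_mono max0_ge max0_nonneg mult_nonneg_nonneg)
  show "c * max0 I f \<le> max0 I (\<lambda>j. c * f j)"
  proof (cases "max0 I f = 0")
    case True
    then show ?thesis using max0_nonneg[OF assms(1)] by simp
  next
    case False
    then obtain j where "j \<in> I" "max0 I f = f j" using max0_attained[OF assms(1), of f] by auto
    then show ?thesis using max0_ge[OF assms(1), of j "\<lambda>j. c * f j"] by simp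
  qed
qed

text \<open>Unlike seminorm, seminorm0 allows the zero function: the seminorms induced on the
  quotients of V in the construction of canonical bases may vanish.\<close>

definition seminorm0 :: "('k::field \<Rightarrow> real) \<Rightarrow> (('n \<Rightarrow> 'k) \<Rightarrow> real) \<Rightarrow> bool" where
  "seminorm0 absK \<gamma> \<longleftrightarrow> (\<forall>x. 0 \<le> \<gamma> x) \<and> (\<forall>c x. \<gamma> (vsmul c x) = absK c * \<gamma> x) \<and>
     (\<forall>x y. \<gamma> (vadd x y) \<le> max (\<gamma> x) (\<gamma> y))"

definition sup_norm :: "('k::field \<Rightarrow> real) \<Rightarrow> ('n::finite \<Rightarrow> 'k) \<Rightarrow> real" where
  "sup_norm absK x = (MAX i. absK (x i))"

definition unit_vec :: "'n \<Rightarrow> 'n \<Rightarrow> 'k::{zero,one}" where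
  "unit_vec j = (\<lambda>i. if i = j then 1 else 0)"

definition supported_on :: "'n set \<Rightarrow> ('n \<Rightarrow> 'k::zero) set" where
  "supported_on I = {x. \<forall>i. i \<notin> I \<longrightarrow> x i = 0}"

definition lincomb_on :: "'n set \<Rightarrow> ('n \<Rightarrow> 'k::field) \<Rightarrow> ('n \<Rightarrow> 'n \<Rightarrow> 'k) \<Rightarrow> 'n \<Rightarrow> 'k" where
  "lincomb_on I l k = (\<lambda>i. \<Sum>j\<in>I. l j * k j i)"

lemma seminorm_imp_seminorm0: "seminorm absK \<gamma> \<Longrightarrow> seminorm0 absK \<gamma>"
  unfolding seminorm_def seminorm0_def by blast

lemma lincomb_eq_lincomb_on: "lincomb l w = lincomb_on UNIV l w"
  unfolding lincomb_def lincomb_on_def by simp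

lemma lincomb_on_unit_vec: "lincomb_on UNIV x unit_vec = (x :: 'n::finite \<Rightarrow> 'k::field)"
  unfolding lincomb_on_def unit_vec_def by (simp add: if_distrib cong: if_cong)

lemma lincomb_on_supported_on: "(\<And>j. j \<in> I \<Longrightarrow> k j \<in> supported_on I) \<Longrightarrow> lincomb_on I l k \<in> supported_on I"
  unfolding supported_on_def lincomb_on_def by (auto intro!: sum.neutral)

context local_field
begin

lemma seminorm0_nonneg: "seminorm0 absK \<gamma> \<Longrightarrow> 0 \<le> \<gamma> x"
  unfolding seminorm0_def by blast

lemma seminorm0_smul: "seminorm0 absK \<gamma> \<Longrightarrow> \<gamma> (\<lambda>i. c * x i) = absK c * \<gamma> x"
  unfolding seminorm0_def vsmul_def by blast

lemma seminorm0_add: "seminorm0 absK \<gamma> \<Longrightarrow> \<gamma> (\<lambda>i. x i + y i) \<le> max (\<gamma> x) (\<gamma> y)"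
  unfolding seminorm0_def vadd_def by blast

lemma seminorm0_zero: "seminorm0 absK \<gamma> \<Longrightarrow> \<gamma> (\<lambda>_. 0) = 0"
  using seminorm0_smul[of \<gamma> 0 "\<lambda>_. 0"] by simp

lemma seminorm0_minus: "seminorm0 absK \<gamma> \<Longrightarrow> \<gamma> (\<lambda>i. - x i) = \<gamma> x"
  using seminorm0_smul[of \<gamma> "-1" x] by simp

lemma seminorm0_diff: "seminorm0 absK \<gamma> \<Longrightarrow> \<gamma> (\<lambda>i. x i - y i) \<le> max (\<gamma> x) (\<gamma> y)"
  using seminorm0_add[of \<gamma> x "\<lambda>i. - y i"] seminorm0_minus[of \<gamma> y] by simp

lemma seminorm0_minus_commute: "seminorm0 absK \<gamma> \<Longrightarrow> \<gamma> (\<lambda>i. x i - y i) = \<gamma> (\<lambda>i. y i - x i)"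
  using seminorm0_minus[of \<gamma> "\<lambda>i. y i - x i"] by simp

lemma seminorm0_abs_diff_le:
  assumes "seminorm0 absK \<gamma>"
  shows "\<bar>\<gamma> x - \<gamma> y\<bar> \<le> \<gamma> (\<lambda>i. x i - y i)"
proof -
  have "\<gamma> x \<le> max (\<gamma> (\<lambda>i. x i - y i)) (\<gamma> y)"
    using seminorm0_add[OF assms, of "\<lambda>i. x i - y i" y] by simp
  moreover have "\<gamma> y \<le> max (\<gamma> (\<lambda>i. y i - x i)) (\<gamma> x)"
    using seminorm0_add[OF assms, of "\<lambda>i. y i - x i" x] by simp
  moreover have "\<gamma> (\<lambda>i. y i - x i) = \<gamma> (\<lambda>i. x i - y i)"
    by (rule seminorm0_minus_commute[OF assms])
  ultimately show ?thesis
    using seminorm0_nonneg[OF assms, of x] seminorm0_nonneg[OF assms, of y]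
      seminorm0_nonneg[OF assms, of "\<lambda>i. x i - y i"]
    by (simp add: abs_le_iff max_def split: if_split_asm)
qed

lemma seminorm0_add_eq_right:
  assumes "seminorm0 absK \<gamma>" "\<gamma> x < \<gamma> y"
  shows "\<gamma> (\<lambda>i. x i + y i) = \<gamma> y"
  using seminorm0_add[OF assms(1), of x y] seminorm0_diff[OF assms(1), of "\<lambda>i. x i + y i" x] assms(2)
  by (auto simp: max_def split: if_splits)

lemma seminorm0_sum_le:
  assumes "seminorm0 absK \<gamma>" "finite I" "\<And>j. j \<in> I \<Longrightarrow> \<gamma> (f j) \<le> M" "0 \<le> M"
  shows "\<gamma> (\<lambda>i. \<Sum>j\<in>I. f j i) \<le> M"
  using assms(2,3)
proof (induction I rule: finite_induct)
  case empty
  then show ?case using seminorm0_zero[OF assms(1)] assms(4) by simp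
next
  case (insert j I)
  have "\<gamma> (\<lambda>i. \<Sum>j\<in>insert j I. f j i) = \<gamma> (\<lambda>i. f j i + (\<Sum>j\<in>I. f j i))"
    using insert by simp
  also have "\<dots> \<le> max (\<gamma> (f j)) (\<gamma> (\<lambda>i. \<Sum>j\<in>I. f j i))"
    using seminorm0_add[OF assms(1)] by simp
  also have "\<dots> \<le> M" using insert by simp
  finally show ?case .
qed

lemma seminorm0_lincomb_on_le:
  assumes "seminorm0 absK \<gamma>" "finite I"
  shows "\<gamma> (lincomb_on I l k) \<le> max0 I (\<lambda>j. absK (l j) * \<gamma> (k j))"
  unfolding lincomb_on_def
proof (rule seminorm0_sum_le[OF assms])
  show "\<gamma> (\<lambda>i. l j * k j i) \<le> max0 I (\<lambda>j. absK (l j) * \<gamma> (k j))" if "j \<in> I" for j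
    using max0_ge[OF assms(2) that, of "\<lambda>j. absK (l j) * \<gamma> (k j)"] seminorm0_smul[OF assms(1)] by simp
qed (rule max0_nonneg[OF assms(2)])

lemma seminorm0_scale:
  assumes "seminorm0 absK \<gamma>" "0 \<le> c"
  shows "seminorm0 absK (\<lambda>x. c * \<gamma> x)"
  unfolding seminorm0_def
proof (intro conjI allI)
  fix x y a
  show "0 \<le> c * \<gamma> x" using assms seminorm0_nonneg[OF assms(1), of x] by simp
  show "c * \<gamma> (vsmul a x) = absK a * (c * \<gamma> x)"
    using assms(1) unfolding seminorm0_def by simp
  have "c * \<gamma> (vadd x y) \<le> c * max (\<gamma> x) (\<gamma> y)"
    using assms unfolding seminorm0_def by (intro mult_left_mono) auto
  then show "c * \<gamma> (vadd x y) \<le> max (c * \<gamma> x) (c * \<gamma> y)"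
    using assms(2) by (simp add: max_mult_distrib_left)
qed

lemma sup_norm_ge: "absK (x i) \<le> sup_norm absK x"
  unfolding sup_norm_def by (rule Max_ge) auto

lemma sup_norm_least: "(\<And>i. absK (x i) \<le> M) \<Longrightarrow> sup_norm absK x \<le> M"
  unfolding sup_norm_def by (rule Max.boundedI) auto

lemma sup_norm_attained: "\<exists>i. sup_norm absK x = absK (x i)"
proof -
  have "sup_norm absK x \<in> range (\<lambda>i. absK (x i))" unfolding sup_norm_def by (rule Max_in) auto
  then show ?thesis by auto
qed

lemma sup_norm_nonneg: "0 \<le> sup_norm absK x"
  using sup_norm_ge[of x] absK_nonneg order_trans by blast

lemma sup_norm_eq_0_iff: "sup_norm absK x = 0 \<longleftrightarrow> x = (\<lambda>_. 0)"
  using sup_norm_ge[of x] sup_norm_attained[of x] absK_nonneg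
  by (metis absK_eq_0_iff antisym)

lemma sup_norm_unit_vec: "sup_norm absK (unit_vec j :: 'n::finite \<Rightarrow> 'k) = 1"
  using sup_norm_ge[of "unit_vec j :: 'n \<Rightarrow> 'k" j]
  by (intro antisym sup_norm_least) (auto simp: unit_vec_def)

lemma seminorm0_sup_norm: "seminorm0 absK (sup_norm absK :: ('n::finite \<Rightarrow> 'k) \<Rightarrow> real)"
  unfolding seminorm0_def
proof (intro conjI allI)
  fix c and x y :: "'n \<Rightarrow> 'k"
  show "0 \<le> sup_norm absK x" by (rule sup_norm_nonneg)
  show "sup_norm absK (vsmul c x) = absK c * sup_norm absK x"
  proof (rule antisym)
    show "sup_norm absK (vsmul c x) \<le> absK c * sup_norm absK x"
      by (rule sup_norm_least) (auto simp: vsmul_def intro: mult_left_mono sup_norm_ge)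
    obtain i where "sup_norm absK x = absK (x i)" using sup_norm_attained by blast
    then show "absK c * sup_norm absK x \<le> sup_norm absK (vsmul c x)"
      using sup_norm_ge[of "vsmul c x" i] by (simp add: vsmul_def)
  qed
  show "sup_norm absK (vadd x y) \<le> max (sup_norm absK x) (sup_norm absK y)"
  proof (rule sup_norm_least)
    fix i
    have "absK (x i + y i) \<le> max (absK (x i)) (absK (y i))" by (rule absK_ultra)
    also have "\<dots> \<le> max (sup_norm absK x) (sup_norm absK y)" by (intro max.mono sup_norm_ge)
    finally show "absK (vadd x y i) \<le> max (sup_norm absK x) (sup_norm absK y)" by (simp add: vadd_def)
  qed
qed

lemma seminorm0_le_sup_norm:
  assumes "seminorm0 absK \<gamma>"
  shows "\<gamma> (x :: 'n::finite \<Rightarrow> 'k) \<le> sup_norm absK x * max0 UNIV (\<lambda>i. \<gamma> (unit_vec i))"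
proof -
  have "\<gamma> x \<le> max0 UNIV (\<lambda>j. absK (x j) * \<gamma> (unit_vec j))"
    using seminorm0_lincomb_on_le[OF assms, of UNIV x unit_vec] by (simp add: lincomb_on_unit_vec)
  also have "\<dots> \<le> max0 UNIV (\<lambda>j. sup_norm absK x * \<gamma> (unit_vec j))"
    by (rule max0_mono) (auto intro: mult_right_mono sup_norm_ge seminorm0_nonneg[OF assms])
  also have "\<dots> = sup_norm absK x * max0 UNIV (\<lambda>i. \<gamma> (unit_vec i))"
    by (rule max0_mult_left) (auto simp: sup_norm_nonneg)
  finally show ?thesis .
qed

lemma seminorm0_abs_diff_le_sup_norm:
  assumes "seminorm0 absK \<gamma>"
  shows "\<bar>\<gamma> x - \<gamma> y\<bar> \<le> sup_norm absK (\<lambda>i. x i - y i) * max0 UNIV (\<lambda>i. \<gamma> (unit_vec i))"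
  using seminorm0_abs_diff_le[OF assms, of x y] seminorm0_le_sup_norm[OF assms, of "\<lambda>i. x i - y i"]
  by linarith

lemma sup_norm_tendsto_0:
  assumes "\<And>i. (\<lambda>m. absK (s m i)) \<longlonglongrightarrow> 0"
  shows "(\<lambda>m. sup_norm absK (s m :: 'n::finite \<Rightarrow> 'k)) \<longlonglongrightarrow> 0"
proof (rule Lim_null_comparison)
  show "(\<lambda>m. \<Sum>i\<in>UNIV. absK (s m i)) \<longlonglongrightarrow> 0"
    using tendsto_sum[of UNIV "\<lambda>i m. absK (s m i)" "\<lambda>_. 0"] assms by simp
  have "sup_norm absK (s m) \<le> (\<Sum>i\<in>UNIV. absK (s m i))" for m
    by (intro sup_norm_least member_le_sum) auto
  then show "\<forall>\<^sub>F m in sequentially. norm (sup_norm absK (s m)) \<le> (\<Sum>i\<in>UNIV. absK (s m i))"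
    by (simp add: sup_norm_nonneg)
qed

lemma bounded_vec_seq_convergent_subseq:
  fixes s :: "nat \<Rightarrow> 'n::finite \<Rightarrow> 'k"
  assumes "\<And>m i. absK (s m i) \<le> R"
  shows "\<exists>l h. strict_mono h \<and> (\<forall>i. (\<lambda>m. absK (s (h m) i - l i)) \<longlonglongrightarrow> 0)"
proof -
  have "\<exists>l h. strict_mono h \<and> (\<forall>i\<in>S. (\<lambda>m. absK (s (h m) i - l i)) \<longlonglongrightarrow> 0)" if "finite S" for S
    using that
  proof (induction S rule: finite_induct)
    case empty
    show ?case using strict_mono_id by blast
  next
    case (insert j S)
    then obtain l h where lh: "strict_mono h" "\<forall>i\<in>S. (\<lambda>m. absK (s (h m) i - l i)) \<longlonglongrightarrow> 0"
      by blast
    obtain a h' where ah: "strict_mono h'" "(\<lambda>m. absK (s (h (h' m)) j - a)) \<longlonglongrightarrow> 0"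
      using bounded_seq_convergent_subseq[of "\<lambda>m. s (h m) j" R] assms by blast
    have "(\<lambda>m. absK (s (h (h' m)) i - l i)) \<longlonglongrightarrow> 0" if "i \<in> S" for i
      using LIMSEQ_subseq_LIMSEQ[OF lh(2)[rule_format, OF that] ah(1)] by (simp add: o_def)
    then have "\<forall>i\<in>insert j S. (\<lambda>m. absK (s ((h \<circ> h') m) i - (l(j := a)) i)) \<longlonglongrightarrow> 0"
      using ah(2) by auto
    with strict_mono_o[OF lh(1) ah(1)] show ?case by (intro exI conjI)
  qed
  from this[of UNIV] show ?thesis by simp
qed

end

section \<open>Canonical bases\<close>

lemma attains_min_if_subseq_lsc:
  fixes \<phi> :: "'a \<Rightarrow> real"
  assumes "S \<noteq> {}" and "\<And>x. x \<in> S \<Longrightarrow> 0 \<le> \<phi> x"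
    and "\<And>s :: nat \<Rightarrow> 'a. (\<And>m. s m \<in> S) \<Longrightarrow>
           \<exists>l\<in>S. \<exists>h e. strict_mono h \<and> e \<longlonglongrightarrow> 0 \<and> (\<forall>m. \<phi> l \<le> \<phi> (s (h m)) + e m)"
  shows "\<exists>x\<in>S. \<forall>y\<in>S. \<phi> x \<le> \<phi> y"
proof -
  define m where "m = Inf (\<phi> ` S)"
  have "bdd_below (\<phi> ` S)" using assms(2) by (intro bdd_belowI2[where m = 0])
  then have m_le: "m \<le> \<phi> y" if "y \<in> S" for y unfolding m_def using that by (intro cInf_lower) auto
  have "\<exists>x\<in>S. \<phi> x < m + 1 / real (Suc k)" for k
    using cInf_lessD[of "\<phi> ` S" "m + 1 / real (Suc k)"] assms(1) unfolding m_def by auto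
  then obtain s where s: "\<And>k. s k \<in> S" "\<And>k. \<phi> (s k) < m + 1 / real (Suc k)" by metis
  then obtain l h e where l: "l \<in> S" "strict_mono h" "e \<longlonglongrightarrow> 0" "\<And>k. \<phi> l \<le> \<phi> (s (h k)) + e k"
    using assms(3)[of s] by blast
  have "(\<lambda>k. 1 / real (Suc (h k))) \<longlonglongrightarrow> 0"
    using LIMSEQ_subseq_LIMSEQ[OF LIMSEQ_inverse_real_of_nat l(2)] by (simp add: o_def divide_inverse)
  then have "(\<lambda>k. m + (1 / real (Suc (h k)) + e k)) \<longlonglongrightarrow> m + (0 + 0)"
    using l(3) by (intro tendsto_intros)
  moreover have "\<phi> l \<le> m + (1 / real (Suc (h k)) + e k)" for k
    using s(2)[of "h k"] l(4)[of k] by linarith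
  ultimately have "\<phi> l \<le> m" by (intro LIMSEQ_le_const[where X = "\<lambda>k. m + (1 / real (Suc (h k)) + e k)"]) auto
  then show ?thesis using l(1) m_le by force
qed

definition quotient_seminorm :: "(('n \<Rightarrow> 'k::field) \<Rightarrow> real) \<Rightarrow> ('n \<Rightarrow> 'k) \<Rightarrow> ('n \<Rightarrow> 'k) \<Rightarrow> real" where
  "quotient_seminorm \<gamma> v y = (INF b. \<gamma> (\<lambda>i. y i + b * v i))"

context local_field
begin

lemma supported_unit_sphere_seq_compact:
  fixes s :: "nat \<Rightarrow> 'n::finite \<Rightarrow> 'k"
  assumes supp: "\<And>m. s m \<in> supported_on I" and norm: "\<And>m. sup_norm absK (s m) = 1"
  shows "\<exists>l h. l \<in> supported_on I \<and> sup_norm absK l = 1 \<and> strict_mono h \<and>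
           (\<lambda>m. sup_norm absK (\<lambda>i. s (h m) i - l i)) \<longlonglongrightarrow> 0"
proof -
  have "absK (s m i) \<le> 1" for m i using norm[of m] sup_norm_ge[of "s m" i] by simp
  then obtain l h where h: "strict_mono h" and lim: "\<And>i. (\<lambda>m. absK (s (h m) i - l i)) \<longlonglongrightarrow> 0"
    using bounded_vec_seq_convergent_subseq[of s 1] by blast
  have dist: "(\<lambda>m. sup_norm absK (\<lambda>i. s (h m) i - l i)) \<longlonglongrightarrow> 0"
    by (rule sup_norm_tendsto_0) (rule lim)
  have "l i = 0" if "i \<notin> I" for i
  proof -
    have "s (h m) i = 0" for m using supp \<open>i \<notin> I\<close> unfolding supported_on_def by auto
    then show "l i = 0" using lim[of i] LIMSEQ_const_iff[of "absK (l i)" 0] by simp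
  qed
  moreover have "\<bar>1 - sup_norm absK l\<bar> \<le> sup_norm absK (\<lambda>i. s (h m) i - l i)" for m
    using seminorm0_abs_diff_le[OF seminorm0_sup_norm, of "s (h m)" l] norm[of "h m"] by simp
  with dist have "\<bar>1 - sup_norm absK l\<bar> \<le> 0" by (intro LIMSEQ_le_const) auto
  ultimately show ?thesis using h dist unfolding supported_on_def by auto
qed

lemma exists_min_on_unit_sphere:
  fixes \<gamma> :: "('n::finite \<Rightarrow> 'k) \<Rightarrow> real"
  assumes \<gamma>: "seminorm0 absK \<gamma>" and "I \<noteq> {}"
  shows "\<exists>v\<in>supported_on I. sup_norm absK v = 1 \<and>
           (\<forall>x\<in>supported_on I. sup_norm absK x = 1 \<longrightarrow> \<gamma> v \<le> \<gamma> x)"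
proof -
  define S where "S = {x \<in> supported_on I. sup_norm absK x = 1}"
  define C where "C = max0 UNIV (\<lambda>i. \<gamma> (unit_vec i :: 'n \<Rightarrow> 'k))"
  obtain j where "j \<in> I" using assms(2) by blast
  then have "unit_vec j \<in> S"
    unfolding S_def using sup_norm_unit_vec[of j] by (auto simp: supported_on_def unit_vec_def)
  have "\<exists>x\<in>S. \<forall>y\<in>S. \<gamma> x \<le> \<gamma> y"
  proof (rule attains_min_if_subseq_lsc)
    show "S \<noteq> {}" using \<open>unit_vec j \<in> S\<close> by blast
    show "0 \<le> \<gamma> x" for x by (rule seminorm0_nonneg[OF \<gamma>])
    fix s :: "nat \<Rightarrow> 'n \<Rightarrow> 'k" assume "\<And>m. s m \<in> S"
    then obtain l h where "l \<in> S" "strict_mono h" and dist: "(\<lambda>m. sup_norm absK (\<lambda>i. s (h m) i - l i)) \<longlonglongrightarrow> 0"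
      using supported_unit_sphere_seq_compact[of s I] unfolding S_def by auto
    have "sup_norm absK (\<lambda>i. l i - s (h m) i) = sup_norm absK (\<lambda>i. s (h m) i - l i)" for m
      by (rule seminorm0_minus_commute[OF seminorm0_sup_norm])
    then have "(\<lambda>m. sup_norm absK (\<lambda>i. l i - s (h m) i) * C) \<longlonglongrightarrow> 0"
      using tendsto_mult_left_zero[OF dist] by simp
    moreover have "\<gamma> l \<le> \<gamma> (s (h m)) + sup_norm absK (\<lambda>i. l i - s (h m) i) * C" for m
      using seminorm0_abs_diff_le_sup_norm[OF \<gamma>, of l "s (h m)"] unfolding C_def by linarith
    ultimately show "\<exists>l\<in>S. \<exists>h e. strict_mono h \<and> e \<longlonglongrightarrow> 0 \<and> (\<forall>m. \<gamma> l \<le> \<gamma> (s (h m)) + e m)"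
      using \<open>l \<in> S\<close> \<open>strict_mono h\<close> by blast
  qed
  then show ?thesis unfolding S_def by auto
qed

lemma exists_min_on_line_segment:
  assumes \<gamma>: "seminorm0 absK \<gamma>" and "0 \<le> R"
  shows "\<exists>a. absK a \<le> R \<and> (\<forall>b. absK b \<le> R \<longrightarrow> \<gamma> (\<lambda>i. y i + a * v i) \<le> \<gamma> (\<lambda>i. y i + b * v i))"
proof -
  define \<phi> where "\<phi> b = \<gamma> (\<lambda>i. y i + b * v i)" for b
  have "\<exists>a\<in>{a. absK a \<le> R}. \<forall>b\<in>{a. absK a \<le> R}. \<phi> a \<le> \<phi> b"
  proof (rule attains_min_if_subseq_lsc)
    have "0 \<in> {a. absK a \<le> R}" using \<open>0 \<le> R\<close> by simp
    then show "{a. absK a \<le> R} \<noteq> {}" by blast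
    show "0 \<le> \<phi> b" for b unfolding \<phi>_def by (rule seminorm0_nonneg[OF \<gamma>])
    fix s :: "nat \<Rightarrow> 'k" assume "\<And>m. s m \<in> {a. absK a \<le> R}"
    then obtain a h where a: "absK a \<le> R" and h: "strict_mono h"
      and lim: "(\<lambda>m. absK (s (h m) - a)) \<longlonglongrightarrow> 0"
      using bounded_seq_convergent_subseq[of s R] by auto
    have "\<phi> a \<le> \<phi> (s (h m)) + absK (s (h m) - a) * \<gamma> v" for m
    proof -
      have "(\<lambda>i. y i + a * v i - (y i + s (h m) * v i)) = (\<lambda>i. (a - s (h m)) * v i)"
        by (simp add: algebra_simps)
      then show ?thesis
        using seminorm0_abs_diff_le[OF \<gamma>, of "\<lambda>i. y i + a * v i" "\<lambda>i. y i + s (h m) * v i"]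
          seminorm0_smul[OF \<gamma>, of "a - s (h m)" v] absK_minus_commute[of a "s (h m)"]
        unfolding \<phi>_def by simp
    qed
    moreover have "(\<lambda>m. absK (s (h m) - a) * \<gamma> v) \<longlonglongrightarrow> 0"
      by (rule tendsto_mult_left_zero[OF lim])
    ultimately show "\<exists>l\<in>{a. absK a \<le> R}. \<exists>h e. strict_mono h \<and> e \<longlonglongrightarrow> 0 \<and> (\<forall>m. \<phi> l \<le> \<phi> (s (h m)) + e m)"
      using a h by blast
  qed
  then show ?thesis unfolding \<phi>_def by auto
qed

lemma exists_min_on_line:
  assumes \<gamma>: "seminorm0 absK \<gamma>"
  shows "\<exists>a. \<forall>b. \<gamma> (\<lambda>i. y i + a * v i) \<le> \<gamma> (\<lambda>i. y i + b * v i)"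
proof (cases "\<gamma> v = 0")
  case True
  have "\<gamma> y \<le> \<gamma> (\<lambda>i. y i + b * v i)" for b
    using seminorm0_diff[OF \<gamma>, of "\<lambda>i. y i + b * v i" "\<lambda>i. b * v i"] True seminorm0_smul[OF \<gamma>, of b v]
      seminorm0_nonneg[OF \<gamma>, of "\<lambda>i. y i + b * v i"]
    by simp
  then show ?thesis by (intro exI[of _ 0]) simp
next
  case False
  then have "0 < \<gamma> v" using seminorm0_nonneg[OF \<gamma>, of v] by simp
  define R where "R = \<gamma> y / \<gamma> v"
  have "0 \<le> R" unfolding R_def using seminorm0_nonneg[OF \<gamma>, of y] \<open>0 < \<gamma> v\<close> by simp
  have far: "\<gamma> y < \<gamma> (\<lambda>i. y i + b * v i)" if "R < absK b" for b
  proof -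
    have "\<gamma> y < \<gamma> (\<lambda>i. b * v i)"
      using that \<open>0 < \<gamma> v\<close> seminorm0_smul[OF \<gamma>, of b v] unfolding R_def by (simp add: divide_less_eq)
    then show ?thesis using seminorm0_add_eq_right[OF \<gamma>] by simp
  qed
  obtain a where "absK a \<le> R" and near: "\<And>b. absK b \<le> R \<Longrightarrow> \<gamma> (\<lambda>i. y i + a * v i) \<le> \<gamma> (\<lambda>i. y i + b * v i)"
    using exists_min_on_line_segment[OF \<gamma> \<open>0 \<le> R\<close>] by blast
  have "\<gamma> (\<lambda>i. y i + a * v i) \<le> \<gamma> y" using near[of 0] \<open>0 \<le> R\<close> by simp
  then have "\<gamma> (\<lambda>i. y i + a * v i) \<le> \<gamma> (\<lambda>i. y i + b * v i)" for b
    using near[of b] far[of b] by (cases "absK b \<le> R") auto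
  then show ?thesis by blast
qed

lemma quotient_seminorm_le:
  assumes "seminorm0 absK \<gamma>"
  shows "quotient_seminorm \<gamma> v y \<le> \<gamma> (\<lambda>i. y i + b * v i)"
  unfolding quotient_seminorm_def
  by (rule cInf_lower) (auto intro: bdd_belowI2[where m = 0] seminorm0_nonneg[OF assms])

lemma quotient_seminorm_attained:
  assumes "seminorm0 absK \<gamma>"
  shows "\<exists>a. \<gamma> (\<lambda>i. y i + a * v i) = quotient_seminorm \<gamma> v y"
proof -
  obtain a where "\<And>b. \<gamma> (\<lambda>i. y i + a * v i) \<le> \<gamma> (\<lambda>i. y i + b * v i)"
    using exists_min_on_line[OF assms] by blast
  then have "quotient_seminorm \<gamma> v y = \<gamma> (\<lambda>i. y i + a * v i)"
    unfolding quotient_seminorm_def by (intro cInf_eq_minimum) auto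
  then show ?thesis by auto
qed

lemma seminorm0_quotient_seminorm:
  assumes \<gamma>: "seminorm0 absK \<gamma>"
  shows "seminorm0 absK (quotient_seminorm \<gamma> v)"
  unfolding seminorm0_def
proof (intro conjI allI)
  fix c x y
  obtain a where a: "\<gamma> (\<lambda>i. x i + a * v i) = quotient_seminorm \<gamma> v x"
    using quotient_seminorm_attained[OF \<gamma>] by blast
  obtain b where b: "\<gamma> (\<lambda>i. y i + b * v i) = quotient_seminorm \<gamma> v y"
    using quotient_seminorm_attained[OF \<gamma>] by blast
  obtain a' where a': "\<gamma> (\<lambda>i. c * x i + a' * v i) = quotient_seminorm \<gamma> v (vsmul c x)"
    using quotient_seminorm_attained[OF \<gamma>, where y = "vsmul c x" and v = v] by (auto simp: vsmul_def)
  show "0 \<le> quotient_seminorm \<gamma> v x" using a seminorm0_nonneg[OF \<gamma>] by metis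
  show "quotient_seminorm \<gamma> v (vsmul c x) = absK c * quotient_seminorm \<gamma> v x"
  proof (rule antisym)
    have "quotient_seminorm \<gamma> v (vsmul c x) \<le> \<gamma> (\<lambda>i. c * (x i + a * v i))"
      using quotient_seminorm_le[OF \<gamma>, of v "vsmul c x" "c * a"] by (simp add: vsmul_def algebra_simps)
    then show "quotient_seminorm \<gamma> v (vsmul c x) \<le> absK c * quotient_seminorm \<gamma> v x"
      using a seminorm0_smul[OF \<gamma>] by simp
    show "absK c * quotient_seminorm \<gamma> v x \<le> quotient_seminorm \<gamma> v (vsmul c x)"
    proof (cases "c = 0")
      case True
      have "0 \<le> quotient_seminorm \<gamma> v (vsmul c x)"
        using a' seminorm0_nonneg[OF \<gamma>, of "\<lambda>i. c * x i + a' * v i"] by linarith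
      with True show ?thesis by simp
    next
      case False
      then have "(\<lambda>i. c * x i + a' * v i) = (\<lambda>i. c * (x i + a' / c * v i))"
        by (simp add: algebra_simps)
      then have "quotient_seminorm \<gamma> v (vsmul c x) = absK c * \<gamma> (\<lambda>i. x i + a' / c * v i)"
        using a' seminorm0_smul[OF \<gamma>] by simp
      then show ?thesis using quotient_seminorm_le[OF \<gamma>, of v x "a' / c"] by (simp add: mult_left_mono)
    qed
  qed
  have "quotient_seminorm \<gamma> v (vadd x y) \<le> \<gamma> (\<lambda>i. (x i + a * v i) + (y i + b * v i))"
    using quotient_seminorm_le[OF \<gamma>, of v "vadd x y" "a + b"] by (simp add: vadd_def algebra_simps)
  also have "\<dots> \<le> max (quotient_seminorm \<gamma> v x) (quotient_seminorm \<gamma> v y)"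
    using seminorm0_add[OF \<gamma>] a b by metis
  finally show "quotient_seminorm \<gamma> v (vadd x y) \<le> max (quotient_seminorm \<gamma> v x) (quotient_seminorm \<gamma> v y)" .
qed

definition canonical_on :: "(('n::finite \<Rightarrow> 'k) \<Rightarrow> real) \<Rightarrow> 'n set \<Rightarrow> ('n \<Rightarrow> 'n \<Rightarrow> 'k) \<Rightarrow> bool" where
  "canonical_on \<gamma> I k \<longleftrightarrow>
     (\<forall>j\<in>I. k j \<in> supported_on I \<and> sup_norm absK (k j) = 1) \<and>
     supported_on I \<subseteq> range (\<lambda>l. lincomb_on I l k) \<and>
     (\<forall>l. sup_norm absK (lincomb_on I l k) = max0 I (\<lambda>j. absK (l j))) \<and>
     (\<forall>l. \<gamma> (lincomb_on I l k) = max0 I (\<lambda>j. absK (l j) * \<gamma> (k j)))"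

context
  fixes \<gamma> :: "('n::finite \<Rightarrow> 'k) \<Rightarrow> real" and v :: "'n \<Rightarrow> 'k" and I :: "'n set" and p :: 'n
  assumes \<gamma>: "seminorm0 absK \<gamma>"
    and v_supp: "v \<in> supported_on I" and v_norm: "sup_norm absK v = 1"
    and v_min: "\<And>x. x \<in> supported_on I \<Longrightarrow> sup_norm absK x = 1 \<Longrightarrow> \<gamma> v \<le> \<gamma> x"
    and v_p: "absK (v p) = 1"
begin

lemma pivot_mem: "p \<in> I"
  using v_supp v_p unfolding supported_on_def by force

lemma sup_norm_mult_le:
  assumes "z \<in> supported_on I"
  shows "sup_norm absK z * \<gamma> v \<le> \<gamma> z"
proof (cases "z = (\<lambda>_. 0)")
  case True
  then have "sup_norm absK z = 0" "\<gamma> z = 0"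
    using sup_norm_eq_0_iff[of z] seminorm0_zero[OF \<gamma>] by simp_all
  then show ?thesis by simp
next
  case False
  obtain i where i: "sup_norm absK z = absK (z i)" using sup_norm_attained by blast
  with False have "z i \<noteq> 0" using sup_norm_eq_0_iff by fastforce
  define z' where "z' = (\<lambda>t. inverse (z i) * z t)"
  have "z' \<in> supported_on I" using assms unfolding z'_def supported_on_def by auto
  moreover have "sup_norm absK z' = 1"
    unfolding z'_def using seminorm0_smul[OF seminorm0_sup_norm, of "inverse (z i)" z] i \<open>z i \<noteq> 0\<close>
    by simp
  ultimately have "\<gamma> v \<le> \<gamma> z'" by (rule v_min)
  moreover have "z = (\<lambda>t. z i * z' t)" unfolding z'_def using \<open>z i \<noteq> 0\<close> by auto
  then have "\<gamma> z = absK (z i) * \<gamma> z'" using seminorm0_smul[OF \<gamma>, of "z i" z'] by metis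
  ultimately show ?thesis using i by (simp add: mult_left_mono)
qed

lemma sup_norm_add_pivot_line:
  assumes "y \<in> supported_on (I - {p})"
  shows "sup_norm absK (\<lambda>i. b * v i + y i) = max (absK b) (sup_norm absK y)"
proof -
  have "y p = 0" using assms unfolding supported_on_def by auto
  then have "absK b \<le> sup_norm absK (\<lambda>i. b * v i + y i)"
    using sup_norm_ge[of "\<lambda>i. b * v i + y i" p] v_p by simp
  moreover have "sup_norm absK (\<lambda>i. b * v i) = absK b"
    using seminorm0_smul[OF seminorm0_sup_norm, of b v] v_norm by simp
  moreover have "sup_norm absK y \<le> max (sup_norm absK (\<lambda>i. b * v i + y i)) (sup_norm absK (\<lambda>i. b * v i))"
    using seminorm0_diff[OF seminorm0_sup_norm, of "\<lambda>i. b * v i + y i" "\<lambda>i. b * v i"] by simp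
  moreover have "sup_norm absK (\<lambda>i. b * v i + y i) \<le> max (sup_norm absK (\<lambda>i. b * v i)) (sup_norm absK y)"
    by (rule seminorm0_add[OF seminorm0_sup_norm])
  ultimately show ?thesis by (auto simp: max_def split: if_splits)
qed

text \<open>Integrality of the coefficient is what keeps the lifted basis orthonormal for the
  sup norm.\<close>

lemma quotient_seminorm_attained_integral:
  assumes y: "y \<in> supported_on (I - {p})"
  shows "\<exists>a. absK a \<le> 1 \<and> \<gamma> (\<lambda>i. y i + a * v i) = quotient_seminorm \<gamma> v y"
proof -
  obtain a where a: "\<gamma> (\<lambda>i. y i + a * v i) = quotient_seminorm \<gamma> v y"
    using quotient_seminorm_attained[OF \<gamma>] by blast
  show ?thesis
  proof (cases "absK a \<le> 1")
    case True
    with a show ?thesis by blast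
  next
    case False
    define z where "z = (\<lambda>i. y i + a * v i)"
    have "z \<in> supported_on I" using y v_supp unfolding z_def supported_on_def by auto
    have "absK a \<le> sup_norm absK z"
      using sup_norm_add_pivot_line[OF y, of a] unfolding z_def by (simp add: add.commute)
    then have "absK a * \<gamma> v \<le> \<gamma> z"
      using sup_norm_mult_le[OF \<open>z \<in> supported_on I\<close>] seminorm0_nonneg[OF \<gamma>, of v]
      by (meson mult_right_mono order_trans)
    moreover have "\<gamma> y \<le> max (\<gamma> z) (\<gamma> (\<lambda>i. a * v i))"
      using seminorm0_diff[OF \<gamma>, of z "\<lambda>i. a * v i"] unfolding z_def by simp
    ultimately have "\<gamma> y \<le> \<gamma> z" using seminorm0_smul[OF \<gamma>, of a v] by simp
    moreover have "quotient_seminorm \<gamma> v y \<le> \<gamma> y" using quotient_seminorm_le[OF \<gamma>, of v y 0] by simp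
    ultimately have "\<gamma> (\<lambda>i. y i + 0 * v i) = quotient_seminorm \<gamma> v y" using a unfolding z_def by simp
    then show ?thesis by (intro exI[of _ 0]) simp
  qed
qed

context
  fixes k :: "'n \<Rightarrow> 'n \<Rightarrow> 'k" and A :: "'n \<Rightarrow> 'k"
  assumes k: "canonical_on (quotient_seminorm \<gamma> v) (I - {p}) k"
    and A_integral: "\<And>j. j \<in> I - {p} \<Longrightarrow> absK (A j) \<le> 1"
    and A_optimal: "\<And>j. j \<in> I - {p} \<Longrightarrow> \<gamma> (\<lambda>i. k j i + A j * v i) = quotient_seminorm \<gamma> v (k j)"
begin

abbreviation lifted_basis :: "'n \<Rightarrow> 'n \<Rightarrow> 'k" where
  "lifted_basis \<equiv> (\<lambda>j i. k j i + A j * v i)(p := v)"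

lemma lincomb_on_lifted_basis:
  "lincomb_on I l lifted_basis = (\<lambda>i. (l p + (\<Sum>j\<in>I - {p}. l j * A j)) * v i + lincomb_on (I - {p}) l k i)"
proof -
  have "lincomb_on I l lifted_basis i = l p * v i + (\<Sum>j\<in>I - {p}. l j * lifted_basis j i)" for i
    unfolding lincomb_on_def by (simp add: sum.remove[OF finite pivot_mem])
  also have "(\<Sum>j\<in>I - {p}. l j * lifted_basis j i) = (\<Sum>j\<in>I - {p}. l j * (k j i + A j * v i))" for i
    by (intro sum.cong) auto
  finally have "lincomb_on I l lifted_basis i = l p * v i + (\<Sum>j\<in>I - {p}. l j * (k j i + A j * v i))" for i .
  then show ?thesis
    unfolding lincomb_on_def by (simp add: algebra_simps sum.distrib sum_distrib_left sum_distrib_right)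
qed

lemma lincomb_on_lifted_basis_supported: "lincomb_on (I - {p}) l k \<in> supported_on (I - {p})"
  using k unfolding canonical_on_def by (intro lincomb_on_supported_on) auto

lemma absK_sum_A_le: "absK (\<Sum>j\<in>I - {p}. l j * A j) \<le> max0 (I - {p}) (\<lambda>j. absK (l j))"
proof (rule absK_sum_le)
  show "absK (l j * A j) \<le> max0 (I - {p}) (\<lambda>j. absK (l j))" if "j \<in> I - {p}" for j
    using mult_left_le[OF A_integral[OF that], of "absK (l j)"] max0_ge[of "I - {p}" j "\<lambda>j. absK (l j)"] that
    by simp
qed (simp_all add: max0_nonneg)

lemma sup_norm_lincomb_on_lifted_basis:
  "sup_norm absK (lincomb_on I l lifted_basis) = max0 I (\<lambda>j. absK (l j))"
proof -
  have "sup_norm absK (lincomb_on I l lifted_basis) =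
      max (absK (l p + (\<Sum>j\<in>I - {p}. l j * A j))) (max0 (I - {p}) (\<lambda>j. absK (l j)))"
    using k lincomb_on_lifted_basis_supported
    unfolding lincomb_on_lifted_basis canonical_on_def by (simp add: sup_norm_add_pivot_line)
  also have "\<dots> = max (absK (l p)) (max0 (I - {p}) (\<lambda>j. absK (l j)))"
    by (rule absK_add_absorb[OF absK_sum_A_le])
  also have "\<dots> = max0 I (\<lambda>j. absK (l j))"
    using max0_insert[of "I - {p}" p] pivot_mem by (simp add: insert_absorb)
  finally show ?thesis .
qed

lemma seminorm_lincomb_on_lifted_basis:
  "\<gamma> (lincomb_on I l lifted_basis) = max0 I (\<lambda>j. absK (l j) * \<gamma> (lifted_basis j))"
proof (rule antisym)
  show "\<gamma> (lincomb_on I l lifted_basis) \<le> max0 I (\<lambda>j. absK (l j) * \<gamma> (lifted_basis j))"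
    by (rule seminorm0_lincomb_on_le[OF \<gamma>]) simp
  have "max0 (I - {p}) (\<lambda>j. absK (l j) * \<gamma> (lifted_basis j)) =
      max0 (I - {p}) (\<lambda>j. absK (l j) * quotient_seminorm \<gamma> v (k j))"
    unfolding max0_def using A_optimal by (auto intro!: arg_cong[where f = Max] image_cong)
  also have "\<dots> = quotient_seminorm \<gamma> v (lincomb_on (I - {p}) l k)"
    using k unfolding canonical_on_def by simp
  also have "\<dots> \<le> \<gamma> (lincomb_on I l lifted_basis)"
    using quotient_seminorm_le[OF \<gamma>, of v "lincomb_on (I - {p}) l k" "l p + (\<Sum>j\<in>I - {p}. l j * A j)"]
    unfolding lincomb_on_lifted_basis by (simp add: add.commute)
  finally have "max0 (I - {p}) (\<lambda>j. absK (l j) * \<gamma> (lifted_basis j)) \<le> \<gamma> (lincomb_on I l lifted_basis)" .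
  moreover have "absK (l p) * \<gamma> v \<le> \<gamma> (lincomb_on I l lifted_basis)"
  proof -
    have "absK (l p) \<le> sup_norm absK (lincomb_on I l lifted_basis)"
      unfolding sup_norm_lincomb_on_lifted_basis using max0_ge[of I p "\<lambda>j. absK (l j)"] pivot_mem by simp
    moreover have "lincomb_on I l lifted_basis \<in> supported_on I"
      using v_supp k pivot_mem unfolding canonical_on_def supported_on_def lincomb_on_lifted_basis
      by (auto simp: lincomb_on_def intro!: sum.neutral)
    ultimately show ?thesis
      using sup_norm_mult_le seminorm0_nonneg[OF \<gamma>, of v] by (meson mult_right_mono order_trans)
  qed
  ultimately show "max0 I (\<lambda>j. absK (l j) * \<gamma> (lifted_basis j)) \<le> \<gamma> (lincomb_on I l lifted_basis)"
    using max0_insert[of "I - {p}" p "\<lambda>j. absK (l j) * \<gamma> (lifted_basis j)"] pivot_mem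
    by (simp add: insert_absorb)
qed

lemma lifted_basis_spans: "supported_on I \<subseteq> range (\<lambda>l. lincomb_on I l lifted_basis)"
proof
  fix x :: "'n \<Rightarrow> 'k" assume x: "x \<in> supported_on I"
  have "v p \<noteq> 0" using v_p by auto
  define y where "y = (\<lambda>i. x i - (x p / v p) * v i)"
  have "y \<in> supported_on (I - {p})"
    using x v_supp \<open>v p \<noteq> 0\<close> unfolding y_def supported_on_def by auto
  moreover have "supported_on (I - {p}) \<subseteq> range (\<lambda>l. lincomb_on (I - {p}) l k)"
    using k unfolding canonical_on_def by blast
  ultimately obtain l where l: "y = lincomb_on (I - {p}) l k" by blast
  define l' where "l' = l(p := x p / v p - (\<Sum>j\<in>I - {p}. l j * A j))"
  have "lincomb_on (I - {p}) l' k = lincomb_on (I - {p}) l k"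
    unfolding l'_def lincomb_on_def by (intro ext sum.cong) auto
  moreover have "(\<Sum>j\<in>I - {p}. l' j * A j) = (\<Sum>j\<in>I - {p}. l j * A j)"
    unfolding l'_def by (intro sum.cong) auto
  moreover have "l' p + (\<Sum>j\<in>I - {p}. l j * A j) = x p / v p"
    unfolding l'_def by simp
  ultimately have "lincomb_on I l' lifted_basis = (\<lambda>i. (x p / v p) * v i + y i)"
    unfolding lincomb_on_lifted_basis l by simp
  also have "\<dots> = x" unfolding y_def by auto
  finally have "x = lincomb_on I l' lifted_basis" by (rule sym)
  then show "x \<in> range (\<lambda>l. lincomb_on I l lifted_basis)" by blast
qed

lemma canonical_on_lifted_basis: "canonical_on \<gamma> I lifted_basis"
  unfolding canonical_on_def
proof (intro conjI ballI allI lifted_basis_spans sup_norm_lincomb_on_lifted_basis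
    seminorm_lincomb_on_lifted_basis)
  fix j assume "j \<in> I"
  show "lifted_basis j \<in> supported_on I"
    using \<open>j \<in> I\<close> v_supp k unfolding canonical_on_def supported_on_def by auto
  show "sup_norm absK (lifted_basis j) = 1"
  proof (cases "j = p")
    case False
    then have "j \<in> I - {p}" using \<open>j \<in> I\<close> by simp
    then have "sup_norm absK (\<lambda>i. A j * v i + k j i) = 1"
      using sup_norm_add_pivot_line[of "k j" "A j"] k A_integral unfolding canonical_on_def by simp
    then show ?thesis using False by (simp add: add.commute)
  qed (simp add: v_norm)
qed

end

end

lemma exists_canonical_on:
  fixes \<gamma> :: "('n::finite \<Rightarrow> 'k) \<Rightarrow> real"
  assumes "seminorm0 absK \<gamma>"
  shows "\<exists>k. canonical_on \<gamma> I k"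
  using finite[of I] assms
proof (induction I arbitrary: \<gamma> rule: finite_psubset_induct)
  case (psubset I)
  show ?case
  proof (cases "I = {}")
    case True
    have "supported_on I = {\<lambda>_. 0}" using True unfolding supported_on_def by auto
    then show ?thesis using True seminorm0_zero[OF psubset.prems] sup_norm_eq_0_iff
      unfolding canonical_on_def lincomb_on_def by auto
  next
    case False
    obtain v where v: "v \<in> supported_on I" "sup_norm absK v = 1"
      "\<And>x. x \<in> supported_on I \<Longrightarrow> sup_norm absK x = 1 \<Longrightarrow> \<gamma> v \<le> \<gamma> x"
      using exists_min_on_unit_sphere[OF psubset.prems False] by blast
    obtain p where p: "absK (v p) = 1" using sup_norm_attained[of v] v(2) by auto
    have "p \<in> I" by (rule pivot_mem[OF psubset.prems v p])
    then obtain k where k: "canonical_on (quotient_seminorm \<gamma> v) (I - {p}) k"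
      using psubset.IH[of "I - {p}"] seminorm0_quotient_seminorm[OF psubset.prems] by blast
    have "\<exists>a. absK a \<le> 1 \<and> \<gamma> (\<lambda>i. k j i + a * v i) = quotient_seminorm \<gamma> v (k j)" if "j \<in> I - {p}" for j
      using quotient_seminorm_attained_integral[OF psubset.prems v p] k that
      unfolding canonical_on_def by blast
    then obtain A where "\<And>j. j \<in> I - {p} \<Longrightarrow> absK (A j) \<le> 1 \<and>
        \<gamma> (\<lambda>i. k j i + A j * v i) = quotient_seminorm \<gamma> v (k j)" by metis
    then show ?thesis using canonical_on_lifted_basis[OF psubset.prems v p k] by blast
  qed
qed

lemma exists_bicanonical_basis:
  fixes \<gamma> :: "('n::finite \<Rightarrow> 'k) \<Rightarrow> real"
  assumes \<gamma>: "seminorm0 absK \<gamma>"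
  shows "\<exists>k. canonical_wrt absK \<gamma> k \<and> canonical_wrt absK (sup_norm absK) k \<and> (\<forall>j. sup_norm absK (k j) = 1)"
proof -
  obtain k where k: "canonical_on \<gamma> UNIV k" using exists_canonical_on[OF \<gamma>] by blast
  have "is_basis k"
    unfolding is_basis_def
  proof
    fix x :: "'n \<Rightarrow> 'k"
    have "x \<in> range (\<lambda>l. lincomb_on UNIV l k)"
      using k unfolding canonical_on_def supported_on_def by auto
    then obtain l where l: "x = lincomb l k" unfolding lincomb_eq_lincomb_on by blast
    show "\<exists>!l. lincomb l k = x"
    proof (rule ex1I[of _ l])
      fix l' assume l': "lincomb l' k = x"
      have "lincomb_on UNIV (\<lambda>j. l' j - l j) k = (\<lambda>i. lincomb l' k i - lincomb l k i)"
        unfolding lincomb_eq_lincomb_on lincomb_on_def by (simp add: algebra_simps sum_subtractf)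
      also have "\<dots> = (\<lambda>_. 0)" using l l' by simp
      finally have "lincomb_on UNIV (\<lambda>j. l' j - l j) k = (\<lambda>_. 0)" .
      then have "max0 UNIV (\<lambda>j. absK (l' j - l j)) = 0"
        using k sup_norm_eq_0_iff unfolding canonical_on_def by metis
      then have "absK (l' j - l j) \<le> 0" for j using max0_ge[of UNIV j "\<lambda>j. absK (l' j - l j)"] by simp
      then show "l' = l" using absK_nonneg by (intro ext) (metis absK_eq_0_iff eq_iff_diff_eq_0 order_antisym)
    qed (use l in simp)
  qed
  moreover have "\<And>l. max0 UNIV (\<lambda>j. absK (l j) * \<gamma> (k j)) = (MAX j. absK (l j) * \<gamma> (k j))"
    by (rule max0_eq_Max) (auto simp: seminorm0_nonneg[OF \<gamma>])
  moreover have "\<And>l. max0 UNIV (\<lambda>j. absK (l j)) = (MAX j. absK (l j) * sup_norm absK (k j))"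
    using k unfolding canonical_on_def by (subst max0_eq_Max) auto
  ultimately show ?thesis using k unfolding canonical_on_def canonical_wrt_def lincomb_eq_lincomb_on by auto
qed

end

section \<open>Change of basis in Sym V\<close>

lemma lincomb_lincomb: "lincomb (lincomb v u) w = lincomb v (\<lambda>j. lincomb (u j) w)"
proof
  fix i
  have "lincomb (lincomb v u) w i = (\<Sum>j\<in>UNIV. \<Sum>t\<in>UNIV. v t * u t j * w j i)"
    unfolding lincomb_def by (simp add: sum_distrib_right)
  also have "\<dots> = (\<Sum>t\<in>UNIV. \<Sum>j\<in>UNIV. v t * u t j * w j i)" by (rule sum.swap)
  also have "\<dots> = lincomb v (\<lambda>j. lincomb (u j) w) i"
    unfolding lincomb_def by (simp add: sum_distrib_left mult_ac)
  finally show "lincomb (lincomb v u) w i = lincomb v (\<lambda>j. lincomb (u j) w) i" .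
qed

lemma lincomb_unit_vec_left: "lincomb (unit_vec k) w = w k"
proof
  fix i
  have "lincomb (unit_vec k) w i = (\<Sum>j\<in>UNIV. if j = k then w j i else 0)"
    unfolding lincomb_def unit_vec_def by (intro sum.cong) auto
  then show "lincomb (unit_vec k) w i = w k i" by simp
qed

lemma lincomb_unit_vec_right: "lincomb v unit_vec = v"
  using lincomb_on_unit_vec by (simp add: lincomb_eq_lincomb_on)

lemma is_basis_unit_vec: "is_basis (unit_vec :: 'n::finite \<Rightarrow> 'n \<Rightarrow> 'k::field)"
  unfolding is_basis_def
proof
  fix v :: "'n \<Rightarrow> 'k"
  show "\<exists>!l. lincomb l unit_vec = v" using lincomb_unit_vec_right by (intro ex1I[of _ v]) auto
qed

lemma is_basis_lincomb_inj:
  assumes "is_basis w" "lincomb l w = lincomb l' w"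
  shows "l = l'"
proof -
  have "\<exists>!l0. lincomb l0 w = lincomb l w" using assms(1) unfolding is_basis_def by blast
  then show ?thesis using assms(2) by (elim ex1E) (metis (mono_tags))
qed

definition basis_inv :: "('n::finite \<Rightarrow> 'n \<Rightarrow> 'k::field) \<Rightarrow> 'n \<Rightarrow> 'n \<Rightarrow> 'k" where
  "basis_inv w j = (THE l. lincomb l w = unit_vec j)"

lemma lincomb_basis_inv_left:
  assumes "is_basis w"
  shows "lincomb (basis_inv w j) w = unit_vec j"
proof -
  have "\<exists>!l. lincomb l w = unit_vec j" using assms unfolding is_basis_def by blast
  then show ?thesis unfolding basis_inv_def by (rule theI')
qed

lemma lincomb_basis_inv_right:
  assumes "is_basis w"
  shows "lincomb (w k) (basis_inv w) = unit_vec k"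
proof (rule is_basis_lincomb_inj[OF assms])
  have "lincomb (lincomb (w k) (basis_inv w)) w = lincomb (w k) (\<lambda>j. lincomb (basis_inv w j) w)"
    by (rule lincomb_lincomb)
  also have "\<dots> = w k" using lincomb_basis_inv_left[OF assms] lincomb_unit_vec_right by simp
  finally show "lincomb (lincomb (w k) (basis_inv w)) w = lincomb (unit_vec k) w"
    by (simp add: lincomb_unit_vec_left)
qed

lemma lincomb_basis_inv: "is_basis w \<Longrightarrow> lincomb (lincomb v (basis_inv w)) w = v"
  by (simp add: lincomb_lincomb lincomb_basis_inv_left lincomb_unit_vec_right)

lemma basis_inv_unit_vec: "basis_inv (unit_vec :: 'n::finite \<Rightarrow> 'n \<Rightarrow> 'k::field) = unit_vec"
proof
  fix j :: 'n
  have "lincomb (basis_inv unit_vec j) (unit_vec :: 'n \<Rightarrow> 'n \<Rightarrow> 'k) = unit_vec j"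
    by (rule lincomb_basis_inv_left[OF is_basis_unit_vec])
  then show "basis_inv unit_vec j = (unit_vec j :: 'n \<Rightarrow> 'k)" by (simp add: lincomb_unit_vec_right)
qed

definition mono_eval :: "('n::finite \<Rightarrow> ('n, 'k::field) sympoly) \<Rightarrow> ('n \<Rightarrow>\<^sub>0 nat) \<Rightarrow> ('n, 'k) sympoly" where
  "mono_eval x \<nu> = (\<Prod>i\<in>UNIV. x i ^ Poly_Mapping.lookup \<nu> i)"

definition poly_eval :: "('n::finite \<Rightarrow> ('n, 'k::field) sympoly) \<Rightarrow> ('n, 'k) sympoly \<Rightarrow> ('n, 'k) sympoly" where
  "poly_eval x g = (\<Sum>\<nu>\<in>Poly_Mapping.keys g. pconst (Poly_Mapping.lookup g \<nu>) * mono_eval x \<nu>)"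

lemma subst_eq_poly_eval: "subst w g = poly_eval (\<lambda>i. lin (w i)) g"
  unfolding subst_def poly_eval_def mono_eval_def ..

lemma pconst_0 [simp]: "pconst 0 = 0"
  unfolding pconst_def by simp

lemma pconst_1 [simp]: "pconst 1 = 1"
  unfolding pconst_def by simp

lemma pconst_add: "pconst (a + b) = pconst a + pconst b"
  unfolding pconst_def by (simp add: single_add)

lemma pconst_mult: "pconst (a * b) = pconst a * pconst b"
  unfolding pconst_def by (simp add: mult_single)

lemma pconst_sum: "pconst (sum f A) = (\<Sum>a\<in>A. pconst (f a))"
  by (induction A rule: infinite_finite_induct) (auto simp: pconst_add)

lemma lookup_pconst_mult: "Poly_Mapping.lookup (pconst c * f) \<nu> = c * Poly_Mapping.lookup f \<nu>"
  unfolding pconst_def mult_map_scale_conv_mult[symmetric] by (simp add: Poly_Mapping.map.rep_eq when_def)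

lemma pconst_mult_single: "pconst c * Poly_Mapping.single \<nu> 1 = Poly_Mapping.single \<nu> c"
  unfolding pconst_def by (simp add: mult_single)

lemma poly_mapping_eq_sum_single:
  assumes "finite S" "Poly_Mapping.keys g \<subseteq> S"
  shows "g = (\<Sum>\<nu>\<in>S. Poly_Mapping.single \<nu> (Poly_Mapping.lookup g \<nu>))"
proof (rule poly_mapping_eqI)
  fix \<kappa>
  have "Poly_Mapping.lookup (\<Sum>\<nu>\<in>S. Poly_Mapping.single \<nu> (Poly_Mapping.lookup g \<nu>)) \<kappa> =
      (\<Sum>\<nu>\<in>S. (Poly_Mapping.lookup g \<nu> when \<nu> = \<kappa>))"
    by (simp add: lookup_sum lookup_single)
  also have "\<dots> = Poly_Mapping.lookup g \<kappa>"
    using assms by (cases "\<kappa> \<in> S") (auto simp: when_def in_keys_iff)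
  finally show "Poly_Mapping.lookup g \<kappa> = Poly_Mapping.lookup (\<Sum>\<nu>\<in>S. Poly_Mapping.single \<nu> (Poly_Mapping.lookup g \<nu>)) \<kappa>"
    by simp
qed

lemma poly_eval_superset:
  assumes "finite S" "Poly_Mapping.keys g \<subseteq> S"
  shows "poly_eval x g = (\<Sum>\<nu>\<in>S. pconst (Poly_Mapping.lookup g \<nu>) * mono_eval x \<nu>)"
  unfolding poly_eval_def using assms
  by (intro sum.mono_neutral_left) (auto simp: in_keys_iff pconst_def)

lemma poly_eval_add: "poly_eval x (g + h) = poly_eval x g + poly_eval x h"
proof -
  let ?S = "Poly_Mapping.keys g \<union> Poly_Mapping.keys h"
  have "poly_eval x (g + h) = (\<Sum>\<nu>\<in>?S. pconst (Poly_Mapping.lookup (g + h) \<nu>) * mono_eval x \<nu>)"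
    by (rule poly_eval_superset) (use keys_add[of g h] in auto)
  also have "\<dots> = (\<Sum>\<nu>\<in>?S. pconst (Poly_Mapping.lookup g \<nu>) * mono_eval x \<nu>) +
      (\<Sum>\<nu>\<in>?S. pconst (Poly_Mapping.lookup h \<nu>) * mono_eval x \<nu>)"
    by (simp add: lookup_add pconst_add distrib_right sum.distrib)
  also have "\<dots> = poly_eval x g + poly_eval x h"
    by (simp add: poly_eval_superset[symmetric])
  finally show ?thesis .
qed

lemma poly_eval_0 [simp]: "poly_eval x 0 = 0"
  unfolding poly_eval_def by simp

lemma poly_eval_sum: "poly_eval x (sum f A) = (\<Sum>a\<in>A. poly_eval x (f a))"
  by (induction A rule: infinite_finite_induct) (auto simp: poly_eval_add)

lemma poly_eval_single: "poly_eval x (Poly_Mapping.single \<nu> c) = pconst c * mono_eval x \<nu>"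
  using poly_eval_superset[of "{\<nu>}" "Poly_Mapping.single \<nu> c" x] by simp

lemma mono_eval_add: "mono_eval x (\<nu> + \<mu>) = mono_eval x \<nu> * mono_eval x \<mu>"
  unfolding mono_eval_def by (simp add: lookup_add power_add prod.distrib)

lemma poly_eval_mult: "poly_eval x (g * h) = poly_eval x g * poly_eval x h"
proof -
  let ?mon = "\<lambda>f \<nu>. Poly_Mapping.single \<nu> (Poly_Mapping.lookup f \<nu>)"
  have "g * h = (\<Sum>\<nu>\<in>Poly_Mapping.keys g. ?mon g \<nu>) * (\<Sum>\<mu>\<in>Poly_Mapping.keys h. ?mon h \<mu>)"
    using poly_mapping_eq_sum_single[of "Poly_Mapping.keys g" g]
      poly_mapping_eq_sum_single[of "Poly_Mapping.keys h" h] by simp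
  also have "\<dots> = (\<Sum>\<nu>\<in>Poly_Mapping.keys g. \<Sum>\<mu>\<in>Poly_Mapping.keys h.
      Poly_Mapping.single (\<nu> + \<mu>) (Poly_Mapping.lookup g \<nu> * Poly_Mapping.lookup h \<mu>))"
    by (simp add: sum_product mult_single)
  finally have "poly_eval x (g * h) = (\<Sum>\<nu>\<in>Poly_Mapping.keys g. \<Sum>\<mu>\<in>Poly_Mapping.keys h.
      pconst (Poly_Mapping.lookup g \<nu> * Poly_Mapping.lookup h \<mu>) * mono_eval x (\<nu> + \<mu>))"
    by (simp add: poly_eval_sum poly_eval_single)
  also have "\<dots> = poly_eval x g * poly_eval x h"
    unfolding poly_eval_def by (simp add: sum_product pconst_mult mono_eval_add mult_ac)
  finally show ?thesis .
qed

lemma poly_eval_pconst: "poly_eval x (pconst c) = pconst c"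
  unfolding pconst_def poly_eval_single by (simp add: pconst_def mono_eval_def)

lemma poly_eval_power: "poly_eval x (g ^ n) = poly_eval x g ^ n"
  using poly_eval_pconst[of x 1] by (induction n) (auto simp: poly_eval_mult pconst_def)

lemma poly_eval_prod: "poly_eval x (prod f A) = (\<Prod>a\<in>A. poly_eval x (f a))"
  using poly_eval_pconst[of x 1] by (induction A rule: infinite_finite_induct) (auto simp: poly_eval_mult pconst_def)

lemma mono_eval_single: "mono_eval x (Poly_Mapping.single i 1) = x i"
proof -
  have "mono_eval x (Poly_Mapping.single i 1) = (\<Prod>j\<in>UNIV. if i = j then x j else 1)"
    unfolding mono_eval_def by (intro prod.cong) (auto simp: lookup_single when_def)
  then show ?thesis by simp
qed

lemma poly_eval_pvar: "poly_eval x (pvar i) = x i"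
  unfolding pvar_def poly_eval_single mono_eval_single by (simp add: pconst_def)

lemma poly_eval_lin: "poly_eval x (lin v) = (\<Sum>i\<in>UNIV. pconst (v i) * x i)"
  unfolding lin_def by (simp add: poly_eval_sum poly_eval_mult poly_eval_pconst poly_eval_pvar)

lemma lin_vadd: "lin (vadd a b) = lin a + lin b"
  unfolding lin_def vadd_def by (simp add: pconst_add distrib_right sum.distrib)

lemma lin_vsmul: "lin (vsmul c a) = pconst c * lin a"
  unfolding lin_def vsmul_def by (simp add: pconst_mult sum_distrib_left mult_ac)

lemma lin_unit_vec: "lin (unit_vec j) = pvar j"
proof -
  have "lin (unit_vec j) = (\<Sum>i\<in>UNIV. if i = j then pvar i else 0)"
    unfolding lin_def unit_vec_def by (intro sum.cong) (auto simp: pconst_def)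
  then show ?thesis by simp
qed

lemma poly_eval_lin_lin: "poly_eval (\<lambda>i. lin (w i)) (lin v) = lin (lincomb v w)"
proof -
  have "poly_eval (\<lambda>i. lin (w i)) (lin v) = (\<Sum>i\<in>UNIV. pconst (v i) * (\<Sum>k\<in>UNIV. pconst (w i k) * pvar k))"
    unfolding poly_eval_lin by (simp only: lin_def)
  also have "\<dots> = (\<Sum>i\<in>UNIV. \<Sum>k\<in>UNIV. pconst (v i * w i k) * pvar k)"
    by (simp add: sum_distrib_left pconst_mult mult_ac)
  also have "\<dots> = (\<Sum>k\<in>UNIV. \<Sum>i\<in>UNIV. pconst (v i * w i k) * pvar k)"
    by (rule sum.swap)
  also have "\<dots> = lin (lincomb v w)"
    unfolding lin_def lincomb_def by (simp add: pconst_sum sum_distrib_right)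
  finally show ?thesis .
qed

lemma poly_eval_poly_eval: "poly_eval x (poly_eval y g) = poly_eval (\<lambda>i. poly_eval x (y i)) g"
  unfolding poly_eval_def[of y g]
  by (simp add: poly_eval_sum poly_eval_mult poly_eval_pconst poly_eval_prod poly_eval_power mono_eval_def
      poly_eval_def[of _ g])

lemma pvar_power: "pvar i ^ m = Poly_Mapping.single (Poly_Mapping.single i m) (1::'k::field)"
proof (induction m)
  case (Suc m)
  then show ?case by (simp add: pvar_def mult_single add.commute flip: single_add)
qed simp

lemma prod_single_1:
  "finite A \<Longrightarrow> (\<Prod>i\<in>A. Poly_Mapping.single (f i) (1::'k::field)) = Poly_Mapping.single (\<Sum>i\<in>A. f i) 1"
  by (induction A rule: finite_induct) (auto simp: mult_single)

lemma mono_eval_pvar: "mono_eval pvar \<nu> = Poly_Mapping.single \<nu> (1::'k::field)"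
proof -
  have "mono_eval pvar \<nu> =
      (\<Prod>i\<in>UNIV. Poly_Mapping.single (Poly_Mapping.single i (Poly_Mapping.lookup \<nu> i)) (1::'k))"
    unfolding mono_eval_def pvar_power ..
  also have "\<dots> = Poly_Mapping.single (\<Sum>i\<in>UNIV. Poly_Mapping.single i (Poly_Mapping.lookup \<nu> i)) 1"
    by (rule prod_single_1) simp
  also have "(\<Sum>i\<in>UNIV. Poly_Mapping.single i (Poly_Mapping.lookup \<nu> i)) = \<nu>"
    by (rule poly_mapping_eqI) (simp add: lookup_sum lookup_single when_def)
  finally show ?thesis .
qed

lemma poly_eval_pvars: "poly_eval pvar g = (g :: ('n::finite, 'k::field) sympoly)"
  using poly_mapping_eq_sum_single[of "Poly_Mapping.keys g" g]
  unfolding poly_eval_def mono_eval_pvar pconst_mult_single by simp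

lemma subst_subst: "subst w (subst u g) = subst (\<lambda>j. lincomb (u j) w) g"
  unfolding subst_eq_poly_eval poly_eval_poly_eval poly_eval_lin_lin ..

lemma subst_unit_vec: "subst unit_vec g = g"
  unfolding subst_eq_poly_eval lin_unit_vec by (rule poly_eval_pvars)

lemma subst_subst_basis_inv: "is_basis w \<Longrightarrow> subst w (subst (basis_inv w) g) = g"
  unfolding subst_subst by (simp add: lincomb_basis_inv_left subst_unit_vec[unfolded unit_vec_def] unit_vec_def)

lemma subst_basis_inv_subst: "is_basis w \<Longrightarrow> subst (basis_inv w) (subst w g) = g"
  unfolding subst_subst by (simp add: lincomb_basis_inv_right subst_unit_vec[unfolded unit_vec_def] unit_vec_def)

lemma the_subst_eq: "is_basis w \<Longrightarrow> (THE g. subst w g = f) = subst (basis_inv w) f"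
  by (rule the_equality) (auto simp: subst_subst_basis_inv subst_basis_inv_subst)

lemma subst_add: "subst w (f + g) = subst w f + subst w g"
  unfolding subst_eq_poly_eval by (rule poly_eval_add)

lemma subst_mult: "subst w (f * g) = subst w f * subst w g"
  unfolding subst_eq_poly_eval by (rule poly_eval_mult)

lemma subst_pconst: "subst w (pconst c) = pconst c"
  unfolding subst_eq_poly_eval by (rule poly_eval_pconst)

lemma subst_lin: "subst w (lin v) = lin (lincomb v w)"
  unfolding subst_eq_poly_eval by (rule poly_eval_lin_lin)

lemma mdeg_add: "mdeg (\<nu> + \<mu>) = mdeg \<nu> + mdeg \<mu>"
  unfolding mdeg_def by (simp add: lookup_add sum.distrib)

lemma mdeg_0 [simp]: "mdeg 0 = 0"
  unfolding mdeg_def by simp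

lemma mdeg_single: "mdeg (Poly_Mapping.single i m) = m"
proof -
  have "mdeg (Poly_Mapping.single i m) = (\<Sum>j\<in>UNIV. if i = j then m else 0)"
    unfolding mdeg_def by (intro sum.cong) (auto simp: lookup_single when_def)
  then show ?thesis by simp
qed

lemma homogeneous_0: "homogeneous d 0"
  unfolding homogeneous_def by simp

lemma homogeneous_add: "homogeneous d f \<Longrightarrow> homogeneous d g \<Longrightarrow> homogeneous d (f + g)"
  unfolding homogeneous_def using keys_add[of f g] by blast

lemma homogeneous_sum: "(\<And>a. a \<in> A \<Longrightarrow> homogeneous d (f a)) \<Longrightarrow> homogeneous d (sum f A)"
  by (induction A rule: infinite_finite_induct) (auto intro: homogeneous_add homogeneous_0)

lemma homogeneous_mult: "homogeneous a f \<Longrightarrow> homogeneous b g \<Longrightarrow> homogeneous (a + b) (f * g)"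
  unfolding homogeneous_def using keys_mult[of f g] by (force simp: mdeg_add)

lemma homogeneous_1: "homogeneous 0 (1 :: ('n::finite, 'k::field) sympoly)"
  unfolding homogeneous_def by simp

lemma homogeneous_power: "homogeneous a f \<Longrightarrow> homogeneous (n * a) (f ^ n)"
  by (induction n) (auto intro: homogeneous_1 dest: homogeneous_mult)

lemma homogeneous_prod:
  "(\<And>i. i \<in> A \<Longrightarrow> homogeneous (d i) (f i)) \<Longrightarrow> homogeneous (\<Sum>i\<in>A. d i) (prod f A)"
  by (induction A rule: infinite_finite_induct) (auto intro: homogeneous_1 homogeneous_mult)

lemma homogeneous_pconst: "homogeneous 0 (pconst c :: ('n::finite, 'k::field) sympoly)"
  unfolding homogeneous_def pconst_def by (cases "c = 0") auto

lemma homogeneous_pvar: "homogeneous 1 (pvar i :: ('n::finite, 'k::field) sympoly)"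
  unfolding homogeneous_def pvar_def by (simp add: mdeg_single)

lemma homogeneous_lin: "homogeneous 1 (lin v :: ('n::finite, 'k::field) sympoly)"
  unfolding lin_def using homogeneous_mult[OF homogeneous_pconst homogeneous_pvar]
  by (auto intro!: homogeneous_sum)

lemma homogeneous_mono_eval:
  assumes "\<And>i. homogeneous 1 (x i)"
  shows "homogeneous (mdeg \<nu>) (mono_eval x \<nu>)"
  using homogeneous_prod[of UNIV "\<lambda>i. Poly_Mapping.lookup \<nu> i * 1" "\<lambda>i. x i ^ Poly_Mapping.lookup \<nu> i"]
    homogeneous_power[OF assms]
  unfolding mono_eval_def mdeg_def by simp

lemma keys_poly_eval_mdeg:
  assumes "\<And>i. homogeneous 1 (x i)" "\<mu> \<in> Poly_Mapping.keys (poly_eval x g)"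
  shows "\<exists>\<nu>\<in>Poly_Mapping.keys g. mdeg \<mu> = mdeg \<nu>"
proof -
  obtain \<nu> where \<nu>: "\<nu> \<in> Poly_Mapping.keys g"
    "\<mu> \<in> Poly_Mapping.keys (pconst (Poly_Mapping.lookup g \<nu>) * mono_eval x \<nu>)"
    using assms(2) keys_sum[of "\<lambda>\<nu>. pconst (Poly_Mapping.lookup g \<nu>) * mono_eval x \<nu>"]
    unfolding poly_eval_def by blast
  have "homogeneous (0 + mdeg \<nu>) (pconst (Poly_Mapping.lookup g \<nu>) * mono_eval x \<nu>)"
    by (rule homogeneous_mult[OF homogeneous_pconst homogeneous_mono_eval[OF assms(1)]])
  then show ?thesis using \<nu> unfolding homogeneous_def by auto
qed

lemma homogeneous_subst: "homogeneous d g \<Longrightarrow> homogeneous d (subst w g)"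
  using keys_poly_eval_mdeg[OF homogeneous_lin, of _ w g]
  unfolding homogeneous_def subst_eq_poly_eval by fastforce

definition degree_le :: "nat \<Rightarrow> ('n::finite, 'k::field) sympoly \<Rightarrow> bool" where
  "degree_le D g \<longleftrightarrow> (\<forall>\<nu>\<in>Poly_Mapping.keys g. mdeg \<nu> \<le> D)"

lemma degree_le_subst: "degree_le D g \<Longrightarrow> degree_le D (subst w g)"
  using keys_poly_eval_mdeg[OF homogeneous_lin, of _ w g]
  unfolding degree_le_def subst_eq_poly_eval by fastforce

lemma exists_degree_le: "\<exists>D. degree_le D g"
  unfolding degree_le_def by (intro exI[of _ "Max (mdeg ` Poly_Mapping.keys g)"]) auto

section \<open>Gauss norms\<close>

definition monomial_weight :: "('n::finite \<Rightarrow> real) \<Rightarrow> ('n \<Rightarrow>\<^sub>0 nat) \<Rightarrow> real" where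
  "monomial_weight \<rho> \<nu> = (\<Prod>i\<in>UNIV. \<rho> i ^ Poly_Mapping.lookup \<nu> i)"

lemma monomial_weight_add: "monomial_weight \<rho> (\<nu> + \<mu>) = monomial_weight \<rho> \<nu> * monomial_weight \<rho> \<mu>"
  unfolding monomial_weight_def by (simp add: lookup_add power_add prod.distrib)

lemma monomial_weight_nonneg: "(\<And>i. 0 \<le> \<rho> i) \<Longrightarrow> 0 \<le> monomial_weight \<rho> \<nu>"
  unfolding monomial_weight_def by (auto intro!: prod_nonneg)

lemma monomial_weight_single: "monomial_weight \<rho> (Poly_Mapping.single i 1) = \<rho> i"
proof -
  have "monomial_weight \<rho> (Poly_Mapping.single i 1) = (\<Prod>j\<in>UNIV. if i = j then \<rho> j else 1)"
    unfolding monomial_weight_def by (intro prod.cong) (auto simp: lookup_single when_def)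
  then show ?thesis by simp
qed

lemma monomial_weight_scale: "monomial_weight (\<lambda>i. c * \<rho> i) \<nu> = c ^ mdeg \<nu> * monomial_weight \<rho> \<nu>"
  unfolding monomial_weight_def mdeg_def by (simp add: power_mult_distrib prod.distrib power_sum)

lemma abs_power_diff_le:
  fixes a b M \<delta> :: real
  assumes "0 \<le> a" "a \<le> M" "0 \<le> b" "b \<le> M" "1 \<le> M" "\<bar>a - b\<bar> \<le> \<delta>"
  shows "\<bar>a ^ n - b ^ n\<bar> \<le> n * M ^ n * \<delta>"
proof (induction n)
  case (Suc n)
  have "a ^ Suc n - b ^ Suc n = a * (a ^ n - b ^ n) + b ^ n * (a - b)" by (simp add: algebra_simps)
  then have "\<bar>a ^ Suc n - b ^ Suc n\<bar> \<le> a * \<bar>a ^ n - b ^ n\<bar> + b ^ n * \<bar>a - b\<bar>"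
    using assms by (simp add: abs_mult order_trans[OF abs_triangle_ineq])
  also have "\<dots> \<le> M * (n * M ^ n * \<delta>) + M ^ n * \<delta>"
    using assms Suc by (intro add_mono mult_mono power_mono) auto
  also have "\<dots> \<le> Suc n * M ^ Suc n * \<delta>"
    using assms mult_right_mono[of "M ^ n" "M ^ Suc n" \<delta>] by (simp add: algebra_simps power_increasing)
  finally show ?case .
qed simp

lemma abs_prod_diff_le:
  fixes x y :: "'a \<Rightarrow> real" and M \<delta> :: real
  assumes "finite S" "1 \<le> M"
    and "\<And>i. i \<in> S \<Longrightarrow> 0 \<le> x i \<and> x i \<le> M ^ n i \<and> 0 \<le> y i \<and> y i \<le> M ^ n i"
    and "\<And>i. i \<in> S \<Longrightarrow> \<bar>x i - y i\<bar> \<le> n i * M ^ n i * \<delta>"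
  shows "\<bar>prod x S - prod y S\<bar> \<le> (\<Sum>i\<in>S. n i) * M ^ (\<Sum>i\<in>S. n i) * \<delta>"
  using assms(1,3,4)
proof (induction S rule: finite_induct)
  case (insert j F)
  define N where "N = (\<Sum>i\<in>F. n i)"
  have xj: "0 \<le> x j" "x j \<le> M ^ n j" "0 \<le> y j" "y j \<le> M ^ n j" using insert.prems(1)[of j] by auto
  have "prod y F \<le> (\<Prod>i\<in>F. M ^ n i)" by (rule prod_mono) (use insert.prems(1) in auto)
  then have Y: "0 \<le> prod y F" "prod y F \<le> M ^ N"
    using insert.prems(1) unfolding N_def by (auto intro: prod_nonneg simp: power_sum)
  have IH: "\<bar>prod x F - prod y F\<bar> \<le> N * M ^ N * \<delta>" unfolding N_def using insert by auto
  have "prod x (insert j F) - prod y (insert j F) = (x j - y j) * prod y F + x j * (prod x F - prod y F)"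
    using insert by (simp add: algebra_simps)
  then have "\<bar>prod x (insert j F) - prod y (insert j F)\<bar> \<le> \<bar>x j - y j\<bar> * prod y F + x j * \<bar>prod x F - prod y F\<bar>"
    using xj Y by (simp add: abs_mult order_trans[OF abs_triangle_ineq])
  also have "\<dots> \<le> (n j * M ^ n j * \<delta>) * M ^ N + M ^ n j * (N * M ^ N * \<delta>)"
    using xj Y IH insert.prems(2)[of j] by (intro add_mono mult_mono) (auto intro: order_trans[OF abs_ge_zero])
  also have "\<dots> = (n j + N) * M ^ (n j + N) * \<delta>" by (simp add: algebra_simps power_add)
  finally show ?case using insert unfolding N_def by simp
qed simp

lemma monomial_weight_lipschitz:
  fixes \<rho> \<rho>' :: "'n::finite \<Rightarrow> real" and M \<delta> :: real
  assumes "\<And>i. 0 \<le> \<rho> i \<and> \<rho> i \<le> M \<and> 0 \<le> \<rho>' i \<and> \<rho>' i \<le> M" "1 \<le> M" "\<And>i. \<bar>\<rho> i - \<rho>' i\<bar> \<le> \<delta>"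
  shows "\<bar>monomial_weight \<rho> \<nu> - monomial_weight \<rho>' \<nu>\<bar> \<le> mdeg \<nu> * M ^ mdeg \<nu> * \<delta>"
  using abs_prod_diff_le[of UNIV M "\<lambda>i. \<rho> i ^ Poly_Mapping.lookup \<nu> i" "Poly_Mapping.lookup \<nu>"
      "\<lambda>i. \<rho>' i ^ Poly_Mapping.lookup \<nu> i" \<delta>] assms abs_power_diff_le[of "\<rho> _" M "\<rho>' _" \<delta>]
  unfolding monomial_weight_def mdeg_def by (simp add: power_mono of_nat_sum)

definition mono_code :: "('n::finite \<Rightarrow>\<^sub>0 nat) \<Rightarrow> nat \<Rightarrow>\<^sub>0 nat" where
  "mono_code \<nu> = (\<Sum>i\<in>UNIV. Poly_Mapping.single (to_nat i) (Poly_Mapping.lookup \<nu> i))"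

lemma mono_code_add: "mono_code (\<nu> + \<mu>) = mono_code \<nu> + mono_code \<mu>"
  unfolding mono_code_def by (simp add: lookup_add single_add sum.distrib)

lemma inj_mono_code: "inj (mono_code :: ('n::finite \<Rightarrow>\<^sub>0 nat) \<Rightarrow> nat \<Rightarrow>\<^sub>0 nat)"
proof (rule injI)
  fix \<nu> \<mu> :: "'n \<Rightarrow>\<^sub>0 nat"
  have lookup_code: "Poly_Mapping.lookup (mono_code \<nu>) (to_nat i) = Poly_Mapping.lookup \<nu> i" for \<nu> i
    unfolding mono_code_def by (simp add: lookup_sum lookup_single when_def)
  assume "mono_code \<nu> = mono_code \<mu>"
  then show "\<nu> = \<mu>" by (metis lookup_code poly_mapping_eqI)
qed

text \<open>Take the maxima of A and B for a monomial order: the lexicographic order on monomials in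
  countably many variables, transported along mono_code.\<close>

lemma exists_unique_sum_decomposition:
  fixes A B :: "('n::finite \<Rightarrow>\<^sub>0 nat) set"
  assumes "finite A" "A \<noteq> {}" "finite B" "B \<noteq> {}"
  shows "\<exists>a\<in>A. \<exists>b\<in>B. \<forall>a'\<in>A. \<forall>b'\<in>B. a' + b' = a + b \<longrightarrow> a' = a \<and> b' = b"
proof -
  have "\<exists>a\<in>S. \<forall>a'\<in>S. mono_code a' \<le> mono_code a" if "finite S" "S \<noteq> {}" for S :: "('n \<Rightarrow>\<^sub>0 nat) set"
    using Max_in[of "mono_code ` S"] Max_ge[of "mono_code ` S"] that by fastforce
  then obtain a b where a: "a \<in> A" "\<And>a'. a' \<in> A \<Longrightarrow> mono_code a' \<le> mono_code a"
    and b: "b \<in> B" "\<And>b'. b' \<in> B \<Longrightarrow> mono_code b' \<le> mono_code b"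
    using assms by meson
  have "a' = a \<and> b' = b" if "a' \<in> A" "b' \<in> B" "a' + b' = a + b" for a' b'
  proof (rule ccontr)
    assume "\<not> (a' = a \<and> b' = b)"
    then have "mono_code a' < mono_code a \<or> mono_code b' < mono_code b"
      using a(2)[OF that(1)] b(2)[OF that(2)] by (auto simp: order_le_less dest: injD[OF inj_mono_code])
    then have "mono_code a' + mono_code b' < mono_code a + mono_code b"
      using a(2)[OF that(1)] b(2)[OF that(2)] by (auto intro: add_less_le_mono add_le_less_mono)
    then show False using that(3) by (simp flip: mono_code_add)
  qed
  then show ?thesis using a(1) b(1) by blast
qed

lemma lookup_mult_eq_sum_keys:
  "Poly_Mapping.lookup (g * h) \<kappa> = (\<Sum>p\<in>Poly_Mapping.keys g \<times> Poly_Mapping.keys h.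
     if fst p + snd p = \<kappa> then Poly_Mapping.lookup g (fst p) * Poly_Mapping.lookup h (snd p) else 0)"
proof -
  have "g * h = (\<Sum>\<nu>\<in>Poly_Mapping.keys g. Poly_Mapping.single \<nu> (Poly_Mapping.lookup g \<nu>)) *
      (\<Sum>\<mu>\<in>Poly_Mapping.keys h. Poly_Mapping.single \<mu> (Poly_Mapping.lookup h \<mu>))"
    using poly_mapping_eq_sum_single[of "Poly_Mapping.keys g" g]
      poly_mapping_eq_sum_single[of "Poly_Mapping.keys h" h] by simp
  then show ?thesis
    by (simp add: sum_product mult_single lookup_sum lookup_single when_def sum.cartesian_product
        case_prod_beta)
qed

lemma single_1_eq_iff: "Poly_Mapping.single j (1::nat) = Poly_Mapping.single i 1 \<longleftrightarrow> j = i"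
  by (metis keys_single one_neq_zero singleton_inject)

lemma lin_eq_sum_single: "lin l = (\<Sum>i\<in>UNIV. Poly_Mapping.single (Poly_Mapping.single i 1) (l i))"
  unfolding lin_def pvar_def pconst_mult_single ..

lemma lookup_lin_single: "Poly_Mapping.lookup (lin l) (Poly_Mapping.single i 1) = l i"
proof -
  have "Poly_Mapping.lookup (lin l) (Poly_Mapping.single i 1) =
      (\<Sum>j\<in>UNIV. if Poly_Mapping.single j (1::nat) = Poly_Mapping.single i 1 then l j else 0)"
    unfolding lin_eq_sum_single by (simp add: lookup_sum lookup_single when_def)
  also have "\<dots> = (\<Sum>j\<in>UNIV. if j = i then l j else 0)"
    using single_1_eq_iff[of _ i] by (intro sum.cong) auto
  finally show ?thesis by simp
qed

lemma keys_lin: "Poly_Mapping.keys (lin l) \<subseteq> range (\<lambda>i. Poly_Mapping.single i 1)"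
  unfolding lin_eq_sum_single by (rule order_trans[OF keys_sum]) auto

lemma le_if_power_le_linear_times_power:
  fixes a M :: real
  assumes bound: "\<And>n. a ^ n \<le> (real n + 1) * M ^ n" and "0 \<le> M"
  shows "a \<le> M"
proof (rule ccontr)
  assume "\<not> a \<le> M"
  then have "0 < M" using bound[of 1] \<open>0 \<le> M\<close> by (cases "M = 0") auto
  define q where "q = a / M"
  have "1 < q" unfolding q_def using \<open>\<not> a \<le> M\<close> \<open>0 < M\<close> by simp
  have "1 \<le> (real n + 1) / q ^ n" for n
    using bound[of n] \<open>0 < M\<close> \<open>1 < q\<close> unfolding q_def by (simp add: power_divide field_simps)
  moreover have "(\<lambda>n. real n / q ^ n + inverse q ^ n) \<longlonglongrightarrow> 0 + 0"
    using lim_n_over_pown[of q] LIMSEQ_power_zero[of "inverse q"] \<open>1 < q\<close>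
    by (intro tendsto_add) (auto simp: inverse_less_1_iff)
  then have "(\<lambda>n. (real n + 1) / q ^ n) \<longlonglongrightarrow> 0"
    by (simp add: add_divide_distrib power_inverse divide_inverse distrib_right)
  ultimately have "1 \<le> (0::real)" by (intro LIMSEQ_le_const[where X = "\<lambda>n. (real n + 1) / q ^ n"]) auto
  then show False by simp
qed

lemma mult_less_mult_if_less_either:
  fixes a b A B :: real
  assumes "0 \<le> a" "a \<le> A" "0 \<le> b" "b \<le> B" "0 < A" "0 < B" "a < A \<or> b < B"
  shows "a * b < A * B"
  using assms(7)
proof
  assume "a < A"
  have "a * b \<le> a * B" by (rule mult_left_mono[OF assms(4) assms(1)])
  also have "\<dots> < A * B" using \<open>a < A\<close> assms(6) by (rule mult_strict_right_mono)
  finally show ?thesis .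
next
  assume "b < B"
  have "a * b \<le> A * b" by (rule mult_right_mono[OF assms(2) assms(3)])
  also have "\<dots> < A * B" using \<open>b < B\<close> assms(5) by (rule mult_strict_left_mono)
  finally show ?thesis .
qed

context local_field
begin

definition gauss_term :: "('n::finite \<Rightarrow> real) \<Rightarrow> ('n, 'k) sympoly \<Rightarrow> ('n \<Rightarrow>\<^sub>0 nat) \<Rightarrow> real" where
  "gauss_term \<rho> g \<nu> = absK (Poly_Mapping.lookup g \<nu>) * monomial_weight \<rho> \<nu>"

lemma gauss_eq_max0: "gauss absK \<rho> g = max0 (Poly_Mapping.keys g) (gauss_term \<rho> g)"
proof -
  have "{absK (Poly_Mapping.lookup g \<nu>) * (\<Prod>i\<in>UNIV. \<rho> i ^ Poly_Mapping.lookup \<nu> i) | \<nu>.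
      \<nu> \<in> Poly_Mapping.keys g} \<union> {0} = insert 0 (gauss_term \<rho> g ` Poly_Mapping.keys g)"
    unfolding gauss_term_def monomial_weight_def by auto
  then show ?thesis unfolding gauss_def max0_def by simp
qed

lemma gauss_eq_max0_superset:
  assumes "finite S" "Poly_Mapping.keys g \<subseteq> S"
  shows "gauss absK \<rho> g = max0 S (gauss_term \<rho> g)"
proof -
  have "insert 0 (gauss_term \<rho> g ` S) = insert 0 (gauss_term \<rho> g ` Poly_Mapping.keys g)"
    using assms(2) by (auto simp: gauss_term_def in_keys_iff)
  then show ?thesis unfolding gauss_eq_max0 max0_def by simp
qed

lemma gauss_term_nonneg: "(\<And>i. 0 \<le> \<rho> i) \<Longrightarrow> 0 \<le> gauss_term \<rho> g \<nu>"
  unfolding gauss_term_def by (simp add: monomial_weight_nonneg)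

lemma gauss_nonneg: "0 \<le> gauss absK \<rho> g"
  unfolding gauss_eq_max0 by (rule max0_nonneg) simp

lemma gauss_term_le_gauss: "gauss_term \<rho> g \<nu> \<le> gauss absK \<rho> g"
proof (cases "\<nu> \<in> Poly_Mapping.keys g")
  case True
  then show ?thesis unfolding gauss_eq_max0 by (intro max0_ge) auto
next
  case False
  then show ?thesis using gauss_nonneg by (simp add: gauss_term_def in_keys_iff)
qed

lemma gauss_least:
  "(\<And>\<nu>. \<nu> \<in> Poly_Mapping.keys g \<Longrightarrow> gauss_term \<rho> g \<nu> \<le> M) \<Longrightarrow> 0 \<le> M \<Longrightarrow> gauss absK \<rho> g \<le> M"
  unfolding gauss_eq_max0 by (rule max0_least) auto

lemma gauss_attained: "gauss absK \<rho> g = 0 \<or> (\<exists>\<nu>\<in>Poly_Mapping.keys g. gauss absK \<rho> g = gauss_term \<rho> g \<nu>)"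
  unfolding gauss_eq_max0 by (rule max0_attained) simp

lemma gauss_add:
  assumes "\<And>i. 0 \<le> \<rho> i"
  shows "gauss absK \<rho> (g + h) \<le> max (gauss absK \<rho> g) (gauss absK \<rho> h)"
proof (rule gauss_least)
  fix \<nu>
  have "gauss_term \<rho> (g + h) \<nu> \<le>
      max (absK (Poly_Mapping.lookup g \<nu>)) (absK (Poly_Mapping.lookup h \<nu>)) * monomial_weight \<rho> \<nu>"
    unfolding gauss_term_def lookup_add by (rule mult_right_mono[OF absK_ultra monomial_weight_nonneg[OF assms]])
  also have "\<dots> = max (gauss_term \<rho> g \<nu>) (gauss_term \<rho> h \<nu>)"
    unfolding gauss_term_def using monomial_weight_nonneg[of \<rho> \<nu>] assms by (simp add: max_mult_distrib_right)
  also have "\<dots> \<le> max (gauss absK \<rho> g) (gauss absK \<rho> h)" by (intro max.mono gauss_term_le_gauss)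
  finally show "gauss_term \<rho> (g + h) \<nu> \<le> max (gauss absK \<rho> g) (gauss absK \<rho> h)" .
qed (simp add: gauss_nonneg le_max_iff_disj)

lemma gauss_pconst_mult:
  assumes "\<And>i. 0 \<le> \<rho> i"
  shows "gauss absK \<rho> (pconst c * g) = absK c * gauss absK \<rho> g"
proof -
  have "Poly_Mapping.keys (pconst c * g) \<subseteq> Poly_Mapping.keys g"
    by (auto simp: in_keys_iff lookup_pconst_mult)
  then have "gauss absK \<rho> (pconst c * g) = max0 (Poly_Mapping.keys g) (gauss_term \<rho> (pconst c * g))"
    by (intro gauss_eq_max0_superset) simp_all
  also have "\<dots> = max0 (Poly_Mapping.keys g) (\<lambda>\<nu>. absK c * gauss_term \<rho> g \<nu>)"
    unfolding gauss_term_def lookup_pconst_mult by (simp add: mult_ac)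
  also have "\<dots> = absK c * gauss absK \<rho> g" unfolding gauss_eq_max0 by (rule max0_mult_left) auto
  finally show ?thesis .
qed

lemma gauss_pconst:
  assumes "\<And>i. 0 \<le> \<rho> i"
  shows "gauss absK \<rho> (pconst c) = absK c"
proof -
  have "gauss absK \<rho> 1 = 1" unfolding gauss_eq_max0 by (simp add: max0_def gauss_term_def monomial_weight_def)
  then show ?thesis using gauss_pconst_mult[where \<rho> = \<rho> and c = c and g = 1] assms by simp
qed

lemma gauss_lin:
  assumes "\<And>i. 0 \<le> \<rho> i"
  shows "gauss absK \<rho> (lin l) = max0 UNIV (\<lambda>i. absK (l i) * \<rho> i)"
proof -
  have "gauss absK \<rho> (lin l) = max0 (range (\<lambda>i. Poly_Mapping.single i 1)) (gauss_term \<rho> (lin l))"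
    by (rule gauss_eq_max0_superset[OF _ keys_lin]) simp
  also have "\<dots> = max0 UNIV (\<lambda>i. absK (l i) * \<rho> i)"
    unfolding max0_def gauss_term_def
    by (simp add: image_image lookup_lin_single[simplified] monomial_weight_single[simplified])
  finally show ?thesis .
qed

lemma gauss_scale:
  assumes "homogeneous d g" "0 \<le> c"
  shows "gauss absK (\<lambda>i. c * \<rho> i) g = c ^ d * gauss absK \<rho> g"
proof -
  have "gauss absK (\<lambda>i. c * \<rho> i) g = max0 (Poly_Mapping.keys g) (\<lambda>\<nu>. c ^ d * gauss_term \<rho> g \<nu>)"
    unfolding gauss_eq_max0 max0_def gauss_term_def monomial_weight_scale
    using assms(1) unfolding homogeneous_def
    by (intro arg_cong[where f = Max] arg_cong[where f = "insert 0"] image_cong) (auto simp: mult_ac)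
  also have "\<dots> = c ^ d * gauss absK \<rho> g" unfolding gauss_eq_max0 by (rule max0_mult_left) (auto simp: assms)
  finally show ?thesis .
qed

lemma gauss_mult_le:
  assumes \<rho>: "\<And>i. 0 \<le> \<rho> i"
  shows "gauss absK \<rho> (g * h) \<le> gauss absK \<rho> g * gauss absK \<rho> h"
proof (rule gauss_least)
  fix \<kappa>
  let ?M = "gauss absK \<rho> g * gauss absK \<rho> h"
  have M: "0 \<le> ?M" by (simp add: gauss_nonneg)
  show "gauss_term \<rho> (g * h) \<kappa> \<le> ?M"
  proof (cases "monomial_weight \<rho> \<kappa> = 0")
    case True
    then show ?thesis using M unfolding gauss_term_def by simp
  next
    case False
    then have w: "0 < monomial_weight \<rho> \<kappa>" using monomial_weight_nonneg[of \<rho> \<kappa>] \<rho> by simp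
    have "gauss_term \<rho> g (fst p) * gauss_term \<rho> h (snd p) \<le> ?M" for p
      by (intro mult_mono gauss_term_le_gauss gauss_nonneg gauss_term_nonneg \<rho>)
    then have "absK (if fst p + snd p = \<kappa> then Poly_Mapping.lookup g (fst p) * Poly_Mapping.lookup h (snd p) else 0)
        * monomial_weight \<rho> \<kappa> \<le> ?M" for p
      using M unfolding gauss_term_def by (auto simp: monomial_weight_add mult_ac)
    then have "absK (Poly_Mapping.lookup (g * h) \<kappa>) \<le> ?M / monomial_weight \<rho> \<kappa>"
      unfolding lookup_mult_eq_sum_keys using w M by (intro absK_sum_le) (auto simp: pos_le_divide_eq)
    then show ?thesis unfolding gauss_term_def using w by (simp add: pos_le_divide_eq)
  qed
qed (simp add: gauss_nonneg)

lemma absK_lookup_mult_dominant: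
  assumes keys: "\<nu>0 \<in> Poly_Mapping.keys g" "\<mu>0 \<in> Poly_Mapping.keys h"
    and dominant: "\<And>\<nu> \<mu>. \<nu> \<in> Poly_Mapping.keys g \<Longrightarrow> \<mu> \<in> Poly_Mapping.keys h \<Longrightarrow> (\<nu>, \<mu>) \<noteq> (\<nu>0, \<mu>0) \<Longrightarrow>
      \<nu> + \<mu> = \<nu>0 + \<mu>0 \<Longrightarrow> absK (Poly_Mapping.lookup g \<nu> * Poly_Mapping.lookup h \<mu>) <
        absK (Poly_Mapping.lookup g \<nu>0 * Poly_Mapping.lookup h \<mu>0)"
  shows "absK (Poly_Mapping.lookup (g * h) (\<nu>0 + \<mu>0)) =
    absK (Poly_Mapping.lookup g \<nu>0 * Poly_Mapping.lookup h \<mu>0)"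
proof -
  define T where "T = absK (Poly_Mapping.lookup g \<nu>0 * Poly_Mapping.lookup h \<mu>0)"
  define c where "c p = (if fst p + snd p = \<nu>0 + \<mu>0
    then Poly_Mapping.lookup g (fst p) * Poly_Mapping.lookup h (snd p) else 0)" for p
  have "0 < T" using keys unfolding T_def by (simp add: in_keys_iff)
  have "absK (c p) < T" if "p \<in> Poly_Mapping.keys g \<times> Poly_Mapping.keys h - {(\<nu>0, \<mu>0)}" for p
    using that dominant[of "fst p" "snd p"] \<open>0 < T\<close> unfolding c_def T_def by (cases p) auto
  then have "absK (\<Sum>p\<in>Poly_Mapping.keys g \<times> Poly_Mapping.keys h - {(\<nu>0, \<mu>0)}. c p) < T"
    using \<open>0 < T\<close> by (intro absK_sum_less) auto
  moreover have "Poly_Mapping.lookup (g * h) (\<nu>0 + \<mu>0) =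
      c (\<nu>0, \<mu>0) + (\<Sum>p\<in>Poly_Mapping.keys g \<times> Poly_Mapping.keys h - {(\<nu>0, \<mu>0)}. c p)"
    unfolding lookup_mult_eq_sum_keys c_def using keys by (subst sum.remove) auto
  moreover have "absK (c (\<nu>0, \<mu>0)) = T" unfolding c_def T_def by simp
  ultimately show ?thesis unfolding T_def by (simp add: absK_add_eq_left)
qed

lemma gauss_mult_ge:
  assumes \<rho>: "\<And>i. 0 \<le> \<rho> i"
  shows "gauss absK \<rho> g * gauss absK \<rho> h \<le> gauss absK \<rho> (g * h)"
proof (cases "gauss absK \<rho> g = 0 \<or> gauss absK \<rho> h = 0")
  case True
  then show ?thesis using gauss_nonneg by auto
next
  case False
  define Mg Mh where "Mg = gauss absK \<rho> g" and "Mh = gauss absK \<rho> h"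
  have pos: "0 < Mg" "0 < Mh" using False gauss_nonneg unfolding Mg_def Mh_def by (auto simp: order_le_less)
  define Sg Sh where "Sg = {\<nu> \<in> Poly_Mapping.keys g. gauss_term \<rho> g \<nu> = Mg}"
    and "Sh = {\<mu> \<in> Poly_Mapping.keys h. gauss_term \<rho> h \<mu> = Mh}"
  have "Sg \<noteq> {}" "Sh \<noteq> {}"
    using gauss_attained[of \<rho> g] gauss_attained[of \<rho> h] False unfolding Sg_def Sh_def Mg_def Mh_def by auto
  then obtain \<nu>0 \<mu>0 where "\<nu>0 \<in> Sg" "\<mu>0 \<in> Sh"
    and uniq: "\<And>\<nu> \<mu>. \<nu> \<in> Sg \<Longrightarrow> \<mu> \<in> Sh \<Longrightarrow> \<nu> + \<mu> = \<nu>0 + \<mu>0 \<Longrightarrow> \<nu> = \<nu>0 \<and> \<mu> = \<mu>0"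
    using exists_unique_sum_decomposition[of Sg Sh] unfolding Sg_def Sh_def by auto
  let ?w = "monomial_weight \<rho> (\<nu>0 + \<mu>0)"
  have term_prod: "absK (Poly_Mapping.lookup g \<nu> * Poly_Mapping.lookup h \<mu>) * ?w =
      gauss_term \<rho> g \<nu> * gauss_term \<rho> h \<mu>" if "\<nu> + \<mu> = \<nu>0 + \<mu>0" for \<nu> \<mu>
    unfolding gauss_term_def by (simp add: monomial_weight_add[of \<rho> \<nu> \<mu>, unfolded that] mult_ac)
  have top: "absK (Poly_Mapping.lookup g \<nu>0 * Poly_Mapping.lookup h \<mu>0) * ?w = Mg * Mh"
    using term_prod[of \<nu>0 \<mu>0] \<open>\<nu>0 \<in> Sg\<close> \<open>\<mu>0 \<in> Sh\<close> unfolding Sg_def Sh_def by simp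
  then have "0 < ?w"
    using pos monomial_weight_nonneg[of \<rho> "\<nu>0 + \<mu>0"] \<rho> by (auto simp: order_le_less)
  have "absK (Poly_Mapping.lookup (g * h) (\<nu>0 + \<mu>0)) * ?w = Mg * Mh"
  proof (subst absK_lookup_mult_dominant)
    fix \<nu> \<mu> assume \<nu>\<mu>: "\<nu> \<in> Poly_Mapping.keys g" "\<mu> \<in> Poly_Mapping.keys h" "(\<nu>, \<mu>) \<noteq> (\<nu>0, \<mu>0)"
      and sum: "\<nu> + \<mu> = \<nu>0 + \<mu>0"
    have le: "gauss_term \<rho> g \<nu> \<le> Mg" "gauss_term \<rho> h \<mu> \<le> Mh"
      unfolding Mg_def Mh_def by (auto intro: gauss_term_le_gauss)
    have "\<nu> \<notin> Sg \<or> \<mu> \<notin> Sh" using uniq[OF _ _ sum] \<nu>\<mu>(3) by auto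
    then have "gauss_term \<rho> g \<nu> < Mg \<or> gauss_term \<rho> h \<mu> < Mh" using \<nu>\<mu> le unfolding Sg_def Sh_def by auto
    then have "gauss_term \<rho> g \<nu> * gauss_term \<rho> h \<mu> < Mg * Mh"
      using le pos by (intro mult_less_mult_if_less_either) (simp_all add: gauss_term_nonneg \<rho>)
    then have "absK (Poly_Mapping.lookup g \<nu> * Poly_Mapping.lookup h \<mu>) * ?w <
        absK (Poly_Mapping.lookup g \<nu>0 * Poly_Mapping.lookup h \<mu>0) * ?w"
      unfolding term_prod[OF sum] top .
    then show "absK (Poly_Mapping.lookup g \<nu> * Poly_Mapping.lookup h \<mu>) <
        absK (Poly_Mapping.lookup g \<nu>0 * Poly_Mapping.lookup h \<mu>0)"
      using \<open>0 < ?w\<close> by (simp only: mult_less_cancel_right_pos)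
  qed (use \<open>\<nu>0 \<in> Sg\<close> \<open>\<mu>0 \<in> Sh\<close> top in \<open>auto simp: Sg_def Sh_def\<close>)
  then have "gauss_term \<rho> (g * h) (\<nu>0 + \<mu>0) = Mg * Mh" unfolding gauss_term_def by simp
  then show ?thesis using gauss_term_le_gauss[of \<rho> "g * h" "\<nu>0 + \<mu>0"] unfolding Mg_def Mh_def by simp
qed

lemma gauss_mult: "(\<And>i. 0 \<le> \<rho> i) \<Longrightarrow> gauss absK \<rho> (g * h) = gauss absK \<rho> g * gauss absK \<rho> h"
  by (intro antisym gauss_mult_le gauss_mult_ge)

lemma gauss_lipschitz:
  fixes \<rho> \<rho>' :: "'n::finite \<Rightarrow> real" and M \<delta> :: real
  assumes "\<And>i. 0 \<le> \<rho> i \<and> \<rho> i \<le> M \<and> 0 \<le> \<rho>' i \<and> \<rho>' i \<le> M" "1 \<le> M" "\<And>i. \<bar>\<rho> i - \<rho>' i\<bar> \<le> \<delta>"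
    and "degree_le D g"
  shows "\<bar>gauss absK \<rho> g - gauss absK \<rho>' g\<bar> \<le> gauss absK (\<lambda>_. 1) g * (D * M ^ D * \<delta>)"
proof -
  define E where "E = gauss absK (\<lambda>_. 1) g * (D * M ^ D * \<delta>)"
  have "0 \<le> \<delta>" using assms(3) by (meson abs_ge_zero order_trans)
  then have "0 \<le> E" unfolding E_def using assms(2) by (auto intro!: mult_nonneg_nonneg gauss_nonneg)
  have term_diff: "\<bar>gauss_term \<rho> g \<nu> - gauss_term \<rho>' g \<nu>\<bar> \<le> E" if "\<nu> \<in> Poly_Mapping.keys g" for \<nu>
  proof -
    have D: "mdeg \<nu> \<le> D" using assms(4) that unfolding degree_le_def by auto
    have "\<bar>gauss_term \<rho> g \<nu> - gauss_term \<rho>' g \<nu>\<bar> =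
        absK (Poly_Mapping.lookup g \<nu>) * \<bar>monomial_weight \<rho> \<nu> - monomial_weight \<rho>' \<nu>\<bar>"
      unfolding gauss_term_def by (simp add: abs_mult flip: right_diff_distrib)
    also have "\<dots> \<le> absK (Poly_Mapping.lookup g \<nu>) * (mdeg \<nu> * M ^ mdeg \<nu> * \<delta>)"
      by (intro mult_left_mono monomial_weight_lipschitz[OF assms(1-3)]) auto
    also have "\<dots> \<le> E"
      unfolding E_def
    proof (rule mult_mono)
      show "absK (Poly_Mapping.lookup g \<nu>) \<le> gauss absK (\<lambda>_. 1) g"
        using gauss_term_le_gauss[of "\<lambda>_. 1" g \<nu>] by (simp add: gauss_term_def monomial_weight_def)
      show "real (mdeg \<nu>) * M ^ mdeg \<nu> * \<delta> \<le> real D * M ^ D * \<delta>"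
        using D assms(2) \<open>0 \<le> \<delta>\<close> by (intro mult_right_mono mult_mono power_increasing) auto
    qed (use \<open>0 \<le> \<delta>\<close> assms(2) gauss_nonneg in auto)
    finally show ?thesis .
  qed
  have "gauss absK \<rho> g \<le> gauss absK \<rho>' g + E"
  proof (rule gauss_least)
    show "gauss_term \<rho> g \<nu> \<le> gauss absK \<rho>' g + E" if "\<nu> \<in> Poly_Mapping.keys g" for \<nu>
      using term_diff[OF that] gauss_term_le_gauss[of \<rho>' g \<nu>] by linarith
  qed (use \<open>0 \<le> E\<close> gauss_nonneg in \<open>auto intro: add_nonneg_nonneg\<close>)
  moreover have "gauss absK \<rho>' g \<le> gauss absK \<rho> g + E"
  proof (rule gauss_least)
    show "gauss_term \<rho>' g \<nu> \<le> gauss absK \<rho> g + E" if "\<nu> \<in> Poly_Mapping.keys g" for \<nu>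
      using term_diff[OF that] gauss_term_le_gauss[of \<rho> g \<nu>] by linarith
  qed (use \<open>0 \<le> E\<close> gauss_nonneg in \<open>auto intro: add_nonneg_nonneg\<close>)
  ultimately show ?thesis unfolding E_def by linarith
qed

section \<open>The multiplicative seminorm attached to a seminorm\<close>

lemma j_rep_eq_gauss:
  "is_basis w \<Longrightarrow> j_rep absK \<gamma> w f = gauss absK (\<lambda>i. \<gamma> (w i)) (subst (basis_inv w) f)"
  unfolding j_rep_def by (simp add: the_subst_eq)

lemma j_rep_nonneg: "is_basis w \<Longrightarrow> 0 \<le> j_rep absK \<gamma> w f"
  by (simp add: j_rep_eq_gauss gauss_nonneg)

lemma j_rep_add:
  "seminorm0 absK \<gamma> \<Longrightarrow> is_basis w \<Longrightarrow> j_rep absK \<gamma> w (f + g) \<le> max (j_rep absK \<gamma> w f) (j_rep absK \<gamma> w g)"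
  unfolding j_rep_eq_gauss subst_add by (rule gauss_add) (simp add: seminorm0_nonneg)

lemma j_rep_mult:
  "seminorm0 absK \<gamma> \<Longrightarrow> is_basis w \<Longrightarrow> j_rep absK \<gamma> w (f * g) = j_rep absK \<gamma> w f * j_rep absK \<gamma> w g"
  unfolding j_rep_eq_gauss subst_mult by (rule gauss_mult) (simp add: seminorm0_nonneg)

lemma j_rep_pconst: "seminorm0 absK \<gamma> \<Longrightarrow> is_basis w \<Longrightarrow> j_rep absK \<gamma> w (pconst c) = absK c"
  unfolding j_rep_eq_gauss subst_pconst by (rule gauss_pconst) (simp add: seminorm0_nonneg)

lemma j_rep_lin:
  assumes \<gamma>: "seminorm0 absK \<gamma>" and w: "canonical_wrt absK \<gamma> w"
  shows "j_rep absK \<gamma> w (lin v) = \<gamma> v"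
proof -
  have "is_basis w" using w unfolding canonical_wrt_def by blast
  define l where "l = lincomb v (basis_inv w)"
  have "j_rep absK \<gamma> w (lin v) = max0 UNIV (\<lambda>i. absK (l i) * \<gamma> (w i))"
    unfolding j_rep_eq_gauss[OF \<open>is_basis w\<close>] subst_lin l_def
    by (rule gauss_lin) (simp add: seminorm0_nonneg[OF \<gamma>])
  also have "\<dots> = (MAX i. absK (l i) * \<gamma> (w i))"
    by (rule max0_eq_Max) (auto simp: seminorm0_nonneg[OF \<gamma>])
  also have "\<dots> = \<gamma> (lincomb l w)" using w unfolding canonical_wrt_def by simp
  also have "lincomb l w = v" unfolding l_def by (rule lincomb_basis_inv[OF \<open>is_basis w\<close>])
  finally show ?thesis .
qed

lemma mult_ultra_subst_le_gauss:
  fixes \<alpha> :: "('n::finite, 'k) sympoly \<Rightarrow> real"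
  assumes nonneg: "\<And>f. 0 \<le> \<alpha> f" and ultra: "\<And>f g. \<alpha> (f + g) \<le> max (\<alpha> f) (\<alpha> g)"
    and mult: "\<And>f g. \<alpha> (f * g) = \<alpha> f * \<alpha> g" and const: "\<And>c. \<alpha> (pconst c) = absK c"
  shows "\<alpha> (subst u g) \<le> gauss absK (\<lambda>i. \<alpha> (lin (u i))) g"
proof -
  have power: "\<alpha> (x ^ n) = \<alpha> x ^ n" for x n
    using const[of 1] by (induction n) (auto simp: mult)
  have prod: "\<alpha> (prod F S) = (\<Prod>s\<in>S. \<alpha> (F s))" for F and S :: "'n set"
    using const[of 1] by (induction S rule: infinite_finite_induct) (auto simp: mult)
  have sum: "\<alpha> (sum F S) \<le> max0 S (\<lambda>s. \<alpha> (F s))" if "finite S" for F and S :: "('n \<Rightarrow>\<^sub>0 nat) set"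
    using that
  proof (induction S rule: finite_induct)
    case (insert x S)
    then show ?case
      using ultra[of "F x" "sum F S"] max0_insert[OF insert(1), of x "\<lambda>s. \<alpha> (F s)"]
      by (auto intro: order_trans max.mono)
  qed (use const[of 0] in simp)
  have "\<alpha> (subst u g) \<le> max0 (Poly_Mapping.keys g)
      (\<lambda>\<nu>. \<alpha> (pconst (Poly_Mapping.lookup g \<nu>) * mono_eval (\<lambda>i. lin (u i)) \<nu>))"
    unfolding subst_eq_poly_eval poly_eval_def by (rule sum) simp
  also have "\<dots> = gauss absK (\<lambda>i. \<alpha> (lin (u i))) g"
    unfolding gauss_eq_max0 gauss_term_def monomial_weight_def mono_eval_def by (simp add: mult const prod power)
  finally show ?thesis .
qed

lemma j_rep_le_gauss:
  assumes \<gamma>: "seminorm0 absK \<gamma>" and w: "canonical_wrt absK \<gamma> w" and u: "is_basis u"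
  shows "j_rep absK \<gamma> w f \<le> gauss absK (\<lambda>i. \<gamma> (u i)) (subst (basis_inv u) f)"
proof -
  have "is_basis w" using w unfolding canonical_wrt_def by blast
  have "j_rep absK \<gamma> w (subst u (subst (basis_inv u) f)) \<le>
      gauss absK (\<lambda>i. j_rep absK \<gamma> w (lin (u i))) (subst (basis_inv u) f)"
    using j_rep_nonneg j_rep_add j_rep_mult j_rep_pconst \<gamma> \<open>is_basis w\<close> by (intro mult_ultra_subst_le_gauss) auto
  then show ?thesis using subst_subst_basis_inv[OF u] j_rep_lin[OF \<gamma> w] by simp
qed

lemma j_rep_canonical_eq:
  assumes \<gamma>: "seminorm0 absK \<gamma>" and w: "canonical_wrt absK \<gamma> w" and w': "canonical_wrt absK \<gamma> w'"
  shows "j_rep absK \<gamma> w = j_rep absK \<gamma> w'"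
proof
  fix f
  have "is_basis w" "is_basis w'" using w w' unfolding canonical_wrt_def by blast+
  then show "j_rep absK \<gamma> w f = j_rep absK \<gamma> w' f"
    using j_rep_le_gauss[OF \<gamma> w \<open>is_basis w'\<close>, of f] j_rep_le_gauss[OF \<gamma> w' \<open>is_basis w\<close>, of f]
    by (simp add: j_rep_eq_gauss)
qed

lemma canonical_wrt_scale:
  assumes \<gamma>: "seminorm0 absK \<gamma>" and w: "canonical_wrt absK \<gamma> w" and "0 \<le> c"
  shows "canonical_wrt absK (\<lambda>x. c * \<gamma> x) w"
  unfolding canonical_wrt_def
proof (intro conjI allI)
  show "is_basis w" using w unfolding canonical_wrt_def by blast
  fix l
  have nonneg: "0 \<le> absK (l i) * \<gamma> (w i)" for i by (simp add: seminorm0_nonneg[OF \<gamma>])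
  have "c * \<gamma> (lincomb l w) = c * max0 UNIV (\<lambda>i. absK (l i) * \<gamma> (w i))"
    using w nonneg unfolding canonical_wrt_def by (simp add: max0_eq_Max)
  also have "\<dots> = max0 UNIV (\<lambda>i. absK (l i) * (c * \<gamma> (w i)))"
    using \<open>0 \<le> c\<close> by (simp add: max0_mult_left[symmetric] mult_ac)
  also have "\<dots> = (MAX i. absK (l i) * (c * \<gamma> (w i)))"
    using \<open>0 \<le> c\<close> nonneg by (intro max0_eq_Max) (auto simp: mult.left_commute)
  finally show "c * \<gamma> (lincomb l w) = (MAX i. absK (l i) * (c * \<gamma> (w i)))" .
qed

lemma j_rep_scale:
  "homogeneous d f \<Longrightarrow> 0 \<le> c \<Longrightarrow> is_basis w \<Longrightarrow>
    j_rep absK (\<lambda>x. c * \<gamma> x) w f = c ^ d * j_rep absK \<gamma> w f"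
  unfolding j_rep_eq_gauss by (rule gauss_scale[OF homogeneous_subst])

definition adapted_basis :: "(('n::finite \<Rightarrow> 'k) \<Rightarrow> real) \<Rightarrow> 'n \<Rightarrow> 'n \<Rightarrow> 'k" where
  "adapted_basis \<gamma> = (SOME k. canonical_wrt absK \<gamma> k \<and> canonical_wrt absK (sup_norm absK) k \<and>
     (\<forall>j. sup_norm absK (k j) = 1))"

lemma adapted_basis:
  assumes "seminorm0 absK \<gamma>"
  shows "canonical_wrt absK \<gamma> (adapted_basis \<gamma>)" "canonical_wrt absK (sup_norm absK) (adapted_basis \<gamma>)"
    "sup_norm absK (adapted_basis \<gamma> j) = 1"
  using someI_ex[OF exists_bicanonical_basis[OF assms]] unfolding adapted_basis_def by blast+

lemma is_basis_adapted_basis: "seminorm0 absK \<gamma> \<Longrightarrow> is_basis (adapted_basis \<gamma>)"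
  using adapted_basis(1) unfolding canonical_wrt_def by blast

definition j_seminorm :: "(('n::finite \<Rightarrow> 'k) \<Rightarrow> real) \<Rightarrow> ('n, 'k) sympoly \<Rightarrow> real" where
  "j_seminorm \<gamma> = j_rep absK \<gamma> (adapted_basis \<gamma>)"

lemma j_seminorm_eq_j_rep:
  "seminorm0 absK \<gamma> \<Longrightarrow> canonical_wrt absK \<gamma> w \<Longrightarrow> j_seminorm \<gamma> = j_rep absK \<gamma> w"
  unfolding j_seminorm_def by (rule j_rep_canonical_eq[OF _ adapted_basis(1)])

lemma canonical_wrt_unit_vec: "canonical_wrt absK (sup_norm absK) (unit_vec :: 'n::finite \<Rightarrow> 'n \<Rightarrow> 'k)"
  unfolding canonical_wrt_def
  by (simp add: is_basis_unit_vec lincomb_unit_vec_right sup_norm_unit_vec) (simp add: sup_norm_def)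

lemma gauss_subst_adapted:
  assumes "canonical_wrt absK (sup_norm absK) k" "\<And>j. sup_norm absK (k j) = 1"
  shows "gauss absK (\<lambda>_. 1) (subst (basis_inv k) f) = gauss absK (\<lambda>_. 1) f"
proof -
  have "is_basis k" using assms(1) unfolding canonical_wrt_def by blast
  then show ?thesis
    using fun_cong[OF j_rep_canonical_eq[OF seminorm0_sup_norm assms(1) canonical_wrt_unit_vec], of f] assms(2)
    by (simp add: j_rep_eq_gauss is_basis_unit_vec basis_inv_unit_vec subst_unit_vec sup_norm_unit_vec)
qed

lemma mult_seminorm_j_seminorm:
  assumes "seminorm absK \<gamma>"
  shows "mult_seminorm absK (j_seminorm \<gamma>)"
proof -
  have \<gamma>: "seminorm0 absK \<gamma>" by (rule seminorm_imp_seminorm0[OF assms])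
  have w: "is_basis (adapted_basis \<gamma>)" by (rule is_basis_adapted_basis[OF \<gamma>])
  obtain x where "\<gamma> x \<noteq> 0" using assms unfolding seminorm_def by blast
  moreover have "j_rep absK \<gamma> (adapted_basis \<gamma>) (f + g) \<le>
      j_rep absK \<gamma> (adapted_basis \<gamma>) f + j_rep absK \<gamma> (adapted_basis \<gamma>) g" for f g
    using j_rep_add[OF \<gamma> w, of f g] j_rep_nonneg[OF w, of \<gamma> f] j_rep_nonneg[OF w, of \<gamma> g] by linarith
  ultimately show ?thesis
    unfolding mult_seminorm_def j_seminorm_def
    using j_rep_nonneg[OF w] j_rep_mult[OF \<gamma> w] j_rep_pconst[OF \<gamma> w]
      j_rep_lin[OF \<gamma> adapted_basis(1)[OF \<gamma>]]
    by auto
qed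

lemma j_seminorm_lin: "seminorm0 absK \<gamma> \<Longrightarrow> j_seminorm \<gamma> (lin v) = \<gamma> v"
  unfolding j_seminorm_def by (rule j_rep_lin[OF _ adapted_basis(1)])

lemma j_seminorm_scale:
  assumes \<gamma>: "seminorm0 absK \<gamma>" and "0 \<le> c" and "homogeneous d f"
  shows "j_seminorm (\<lambda>x. c * \<gamma> x) f = c ^ d * j_seminorm \<gamma> f"
proof -
  have "canonical_wrt absK (\<lambda>x. c * \<gamma> x) (adapted_basis \<gamma>)"
    by (rule canonical_wrt_scale[OF \<gamma> adapted_basis(1)[OF \<gamma>] \<open>0 \<le> c\<close>])
  moreover note is_basis_adapted_basis[OF \<gamma>]
  ultimately show ?thesis
    using j_seminorm_eq_j_rep[OF seminorm0_scale[OF \<gamma> \<open>0 \<le> c\<close>]] j_rep_scale[OF assms(3) \<open>0 \<le> c\<close>]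
    unfolding j_seminorm_def by simp
qed

section \<open>Continuity of j\<close>

lemma unit_ball_totally_bounded:
  assumes "0 < t"
  shows "\<exists>E. finite E \<and> (\<forall>a. absK a \<le> 1 \<longrightarrow> (\<exists>e\<in>E. absK (a - e) < t))"
proof (rule ccontr)
  assume "\<not> ?thesis"
  then have far: "\<exists>a. absK a \<le> 1 \<and> (\<forall>e\<in>E. t \<le> absK (a - e))" if "finite E" for E
    using that by (auto simp: not_less)
  define p where "p E = (SOME a. absK a \<le> 1 \<and> (\<forall>e\<in>E. t \<le> absK (a - e)))" for E
  define S where "S = rec_nat {} (\<lambda>_ E. insert (p E) E)"
  have S_0: "S 0 = {}" and S_Suc: "S (Suc n) = insert (p (S n)) (S n)" for n
    unfolding S_def by simp_all
  have fin: "finite (S n)" for n by (induction n) (simp_all add: S_0 S_Suc)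
  have p: "absK (p (S n)) \<le> 1 \<and> (\<forall>e\<in>S n. t \<le> absK (p (S n) - e))" for n
    unfolding p_def by (rule someI_ex[OF far[OF fin]])
  have mem: "p (S j) \<in> S n" if "j < n" for j n
    using that by (induction n) (auto simp: S_Suc less_Suc_eq)
  obtain l h where h: "strict_mono h" and lim: "(\<lambda>m. absK (p (S (h m)) - l)) \<longlonglongrightarrow> 0"
    using unit_ball_seq_compact[of "\<lambda>n. p (S n)"] p by blast
  obtain N where N: "\<And>m. N \<le> m \<Longrightarrow> absK (p (S (h m)) - l) < t"
    using order_tendstoD(2)[OF lim assms] by (auto simp: eventually_sequentially)
  have "absK (p (S (h (Suc N))) - p (S (h N))) \<le>
      max (absK (p (S (h (Suc N))) - l)) (absK (p (S (h N)) - l))"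
    using absK_diff_le[of "p (S (h (Suc N))) - l" "p (S (h N)) - l"] by simp
  also have "\<dots> < t" using N[of N] N[of "Suc N"] by simp
  finally show False
    using p[of "h (Suc N)"] mem[of "h N" "h (Suc N)"] h by (auto simp: strict_mono_def)
qed

lemma unit_ball_vec_totally_bounded:
  assumes "0 < t"
  shows "\<exists>F. finite F \<and>
    (\<forall>v :: 'n::finite \<Rightarrow> 'k. sup_norm absK v \<le> 1 \<longrightarrow> (\<exists>v0\<in>F. sup_norm absK (\<lambda>i. v i - v0 i) \<le> t))"
proof -
  obtain E where "finite E" and E: "\<And>a. absK a \<le> 1 \<Longrightarrow> \<exists>e\<in>E. absK (a - e) < t"
    using unit_ball_totally_bounded[OF assms] by blast
  have "finite (Pi (UNIV :: 'n set) (\<lambda>_. E))"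
    using finite_PiE[of "UNIV :: 'n set" "\<lambda>_. E"] \<open>finite E\<close> by (simp add: PiE_UNIV_domain)
  moreover have "\<exists>v0\<in>Pi UNIV (\<lambda>_. E). sup_norm absK (\<lambda>i. v i - v0 i) \<le> t"
    if "sup_norm absK v \<le> 1" for v :: "'n \<Rightarrow> 'k"
  proof -
    have "\<forall>i. \<exists>e\<in>E. absK (v i - e) < t" using E sup_norm_ge[of v] that by (meson order_trans)
    then obtain v0 where "\<And>i. v0 i \<in> E" "\<And>i. absK (v i - v0 i) < t" by metis
    then show ?thesis by (intro bexI[of _ v0] sup_norm_least) (auto intro: less_imp_le)
  qed
  ultimately show ?thesis by blast
qed

lemma seminorm0_uniformly_close:
  fixes \<gamma> :: "('n::finite \<Rightarrow> 'k) \<Rightarrow> real"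
  assumes \<gamma>: "seminorm0 absK \<gamma>" and "0 < \<epsilon>"
  shows "\<exists>F \<eta>. finite F \<and> 0 < \<eta> \<and> (\<forall>\<gamma>'. seminorm0 absK \<gamma>' \<longrightarrow> (\<forall>v\<in>F. \<bar>\<gamma>' v - \<gamma> v\<bar> < \<eta>) \<longrightarrow>
       (\<forall>v. sup_norm absK v \<le> 1 \<longrightarrow> \<bar>\<gamma>' v - \<gamma> v\<bar> \<le> \<epsilon>))"
proof -
  define C where "C = max0 UNIV (\<lambda>i. \<gamma> (unit_vec i :: 'n \<Rightarrow> 'k))"
  have "0 \<le> C" unfolding C_def by (rule max0_nonneg) simp
  define \<eta> where "\<eta> = min 1 (\<epsilon> / 2)"
  define t where "t = \<epsilon> / (2 * (2 * C + 1))"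
  have \<eta>: "0 < \<eta>" "\<eta> \<le> 1" "\<eta> \<le> \<epsilon> / 2" unfolding \<eta>_def using \<open>0 < \<epsilon>\<close> by auto
  have "0 < t" unfolding t_def using \<open>0 < \<epsilon>\<close> \<open>0 \<le> C\<close> by simp
  then obtain F where "finite F"
    and net: "\<And>v :: 'n \<Rightarrow> 'k. sup_norm absK v \<le> 1 \<Longrightarrow> \<exists>v0\<in>F. sup_norm absK (\<lambda>i. v i - v0 i) \<le> t"
    using unit_ball_vec_totally_bounded by blast
  have "\<bar>\<gamma>' v - \<gamma> v\<bar> \<le> \<epsilon>" if \<gamma>': "seminorm0 absK \<gamma>'"
    and close: "\<forall>v\<in>F \<union> range unit_vec. \<bar>\<gamma>' v - \<gamma> v\<bar> < \<eta>" and "sup_norm absK v \<le> 1" for \<gamma>' v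
  proof -
    obtain v0 where "v0 \<in> F" and d: "sup_norm absK (\<lambda>i. v i - v0 i) \<le> t"
      using net[OF \<open>sup_norm absK v \<le> 1\<close>] by blast
    define C' where "C' = max0 UNIV (\<lambda>i. \<gamma>' (unit_vec i :: 'n \<Rightarrow> 'k))"
    have "C' \<le> C + 1" unfolding C'_def
    proof (rule max0_least)
      fix i :: 'n
      have "\<bar>\<gamma>' (unit_vec i) - \<gamma> (unit_vec i)\<bar> < \<eta>" using close by auto
      moreover have "\<gamma> (unit_vec i) \<le> C" unfolding C_def by (rule max0_ge) auto
      ultimately show "\<gamma>' (unit_vec i) \<le> C + 1" using \<eta> by linarith
    qed (use \<open>0 \<le> C\<close> in auto)
    have "\<bar>\<gamma>' v - \<gamma>' v0\<bar> \<le> sup_norm absK (\<lambda>i. v i - v0 i) * C'"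
      unfolding C'_def by (rule seminorm0_abs_diff_le_sup_norm[OF \<gamma>'])
    also have "\<dots> \<le> t * (C + 1)"
      using d \<open>C' \<le> C + 1\<close> \<open>0 < t\<close> sup_norm_nonneg unfolding C'_def
      by (intro mult_mono) (auto intro: max0_nonneg)
    finally have 1: "\<bar>\<gamma>' v - \<gamma>' v0\<bar> \<le> t * (C + 1)" .
    have "\<bar>\<gamma> v - \<gamma> v0\<bar> \<le> sup_norm absK (\<lambda>i. v i - v0 i) * C"
      unfolding C_def by (rule seminorm0_abs_diff_le_sup_norm[OF \<gamma>])
    also have "\<dots> \<le> t * C" using d \<open>0 \<le> C\<close> by (intro mult_right_mono) auto
    finally have 2: "\<bar>\<gamma> v - \<gamma> v0\<bar> \<le> t * C" .
    have 3: "\<bar>\<gamma>' v0 - \<gamma> v0\<bar> < \<eta>" using close \<open>v0 \<in> F\<close> by blast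
    have "t * (2 * C + 1) = \<epsilon> / 2" unfolding t_def using \<open>0 \<le> C\<close> by (simp add: field_split_simps)
    then have "t * (C + 1) + t * C = \<epsilon> / 2" by (simp add: algebra_simps)
    then show ?thesis using 1 2 3 \<eta> by linarith
  qed
  then show ?thesis using \<open>finite F\<close> \<eta>(1) by (intro exI[of _ "F \<union> range unit_vec"] exI[of _ \<eta>]) auto
qed

lemma j_seminorm_eq_gauss:
  "seminorm0 absK \<gamma> \<Longrightarrow>
    j_seminorm \<gamma> f = gauss absK (\<lambda>i. \<gamma> (adapted_basis \<gamma> i)) (subst (basis_inv (adapted_basis \<gamma>)) f)"
  unfolding j_seminorm_def by (simp add: j_rep_eq_gauss is_basis_adapted_basis)

lemma j_seminorm_le_gauss:
  "seminorm0 absK \<gamma> \<Longrightarrow> is_basis u \<Longrightarrow> j_seminorm \<gamma> f \<le> gauss absK (\<lambda>i. \<gamma> (u i)) (subst (basis_inv u) f)"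
  unfolding j_seminorm_def by (rule j_rep_le_gauss[OF _ adapted_basis(1)])

lemma j_seminorm_diff_le:
  fixes \<gamma> \<gamma>' :: "('n::finite \<Rightarrow> 'k) \<Rightarrow> real" and M \<delta> :: real
  assumes \<gamma>: "seminorm0 absK \<gamma>" and \<gamma>': "seminorm0 absK \<gamma>'" and "degree_le D f" and "1 \<le> M"
    and bounded: "\<And>v. sup_norm absK v \<le> 1 \<Longrightarrow> \<gamma> v \<le> M \<and> \<gamma>' v \<le> M"
    and close: "\<And>v. sup_norm absK v \<le> 1 \<Longrightarrow> \<bar>\<gamma>' v - \<gamma> v\<bar> \<le> \<delta>"
  shows "\<bar>j_seminorm \<gamma>' f - j_seminorm \<gamma> f\<bar> \<le> gauss absK (\<lambda>_. 1) f * (D * M ^ D * \<delta>)"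
proof -
  let ?K = "gauss absK (\<lambda>_. 1) f * (D * M ^ D * \<delta>)"
  let ?G = "\<lambda>\<gamma> u. gauss absK (\<lambda>i. \<gamma> (u i)) (subst (basis_inv u) f)"
  have gauss_close: "\<bar>?G \<gamma> u - ?G \<gamma>' u\<bar> \<le> ?K"
    if u: "canonical_wrt absK (sup_norm absK) u" "\<And>j. sup_norm absK (u j) = 1" for u
  proof -
    have "\<bar>?G \<gamma> u - ?G \<gamma>' u\<bar> \<le> gauss absK (\<lambda>_. 1) (subst (basis_inv u) f) * (D * M ^ D * \<delta>)"
      using bounded close u(2) seminorm0_nonneg[OF \<gamma>] seminorm0_nonneg[OF \<gamma>'] \<open>1 \<le> M\<close>
        degree_le_subst[OF \<open>degree_le D f\<close>]
      by (intro gauss_lipschitz) (auto simp: abs_minus_commute)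
    then show ?thesis unfolding gauss_subst_adapted[OF u] .
  qed
  have "j_seminorm \<gamma>' f \<le> j_seminorm \<gamma> f + ?K"
  proof -
    have "j_seminorm \<gamma>' f \<le> ?G \<gamma>' (adapted_basis \<gamma>)"
      by (rule j_seminorm_le_gauss[OF \<gamma>' is_basis_adapted_basis[OF \<gamma>]])
    also have "\<dots> \<le> ?G \<gamma> (adapted_basis \<gamma>) + ?K"
      using gauss_close[OF adapted_basis(2,3)[OF \<gamma>]] by linarith
    finally show ?thesis by (simp add: j_seminorm_eq_gauss[OF \<gamma>])
  qed
  moreover have "j_seminorm \<gamma> f \<le> j_seminorm \<gamma>' f + ?K"
  proof -
    have "j_seminorm \<gamma> f \<le> ?G \<gamma> (adapted_basis \<gamma>')"
      by (rule j_seminorm_le_gauss[OF \<gamma> is_basis_adapted_basis[OF \<gamma>']])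
    also have "\<dots> \<le> ?G \<gamma>' (adapted_basis \<gamma>') + ?K"
      using gauss_close[OF adapted_basis(2,3)[OF \<gamma>']] by linarith
    finally show ?thesis by (simp add: j_seminorm_eq_gauss[OF \<gamma>'])
  qed
  ultimately show ?thesis by linarith
qed

lemma j_seminorm_locally_close:
  fixes \<gamma> :: "('n::finite \<Rightarrow> 'k) \<Rightarrow> real"
  assumes \<gamma>: "seminorm0 absK \<gamma>" and "0 < \<epsilon>"
  shows "\<exists>F \<eta>. finite F \<and> 0 < \<eta> \<and> (\<forall>\<gamma>'. seminorm0 absK \<gamma>' \<longrightarrow> (\<forall>v\<in>F. \<bar>\<gamma>' v - \<gamma> v\<bar> < \<eta>) \<longrightarrow>
       \<bar>j_seminorm \<gamma>' f - j_seminorm \<gamma> f\<bar> < \<epsilon>)"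
proof -
  obtain D where "degree_le D f" using exists_degree_le by blast
  define C where "C = max0 UNIV (\<lambda>i. \<gamma> (unit_vec i :: 'n \<Rightarrow> 'k))"
  have "0 \<le> C" unfolding C_def by (rule max0_nonneg) simp
  have bound: "\<gamma> v \<le> C" if "sup_norm absK v \<le> 1" for v
    using seminorm0_le_sup_norm[OF \<gamma>, of v] that \<open>0 \<le> C\<close> sup_norm_nonneg[of v]
    unfolding C_def by (meson mult_left_le_one_le order_trans)
  define M where "M = C + 2"
  define K where "K = gauss absK (\<lambda>_. 1) f * (D * M ^ D)"
  have "0 \<le> K" unfolding K_def M_def using \<open>0 \<le> C\<close> by (auto intro!: mult_nonneg_nonneg gauss_nonneg)
  define \<delta> where "\<delta> = min 1 (\<epsilon> / (K + 1))"
  have \<delta>: "0 < \<delta>" "\<delta> \<le> 1" unfolding \<delta>_def using \<open>0 < \<epsilon>\<close> \<open>0 \<le> K\<close> by auto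
  have "K * \<delta> \<le> K * (\<epsilon> / (K + 1))" unfolding \<delta>_def using \<open>0 \<le> K\<close> by (intro mult_left_mono) auto
  also have "\<dots> < \<epsilon>" using \<open>0 \<le> K\<close> \<open>0 < \<epsilon>\<close> by (simp add: pos_divide_less_eq algebra_simps)
  finally have "K * \<delta> < \<epsilon>" .
  obtain F \<eta> where "finite F" "0 < \<eta>" and uniform: "\<And>\<gamma>'. seminorm0 absK \<gamma>' \<Longrightarrow>
      (\<forall>v\<in>F. \<bar>\<gamma>' v - \<gamma> v\<bar> < \<eta>) \<Longrightarrow> (\<forall>v. sup_norm absK v \<le> 1 \<longrightarrow> \<bar>\<gamma>' v - \<gamma> v\<bar> \<le> \<delta>)"
    using seminorm0_uniformly_close[OF \<gamma> \<open>0 < \<delta>\<close>] by blast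
  have "\<bar>j_seminorm \<gamma>' f - j_seminorm \<gamma> f\<bar> \<le> K * \<delta>"
    if \<gamma>': "seminorm0 absK \<gamma>'" and "\<forall>v\<in>F. \<bar>\<gamma>' v - \<gamma> v\<bar> < \<eta>" for \<gamma>'
    using j_seminorm_diff_le[OF \<gamma> \<gamma>' \<open>degree_le D f\<close>, of M \<delta>] uniform[OF that] bound \<delta> \<open>0 \<le> C\<close>
    unfolding K_def M_def by (force simp: mult_ac)
  then show ?thesis using \<open>finite F\<close> \<open>0 < \<eta>\<close> \<open>K * \<delta> < \<epsilon>\<close> by (meson le_less_trans)
qed

lemma openin_seminorm_top_close:
  assumes "finite F"
  shows "openin (seminorm_top absK) {\<gamma>' \<in> topspace (seminorm_top absK). \<forall>v\<in>F. \<bar>\<gamma>' v - \<gamma> v\<bar> < \<eta>}"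
  using assms
proof (induction F rule: finite_induct)
  case (insert v F)
  have "continuous_map (seminorm_top absK) euclideanreal (\<lambda>\<gamma>'. \<gamma>' v)"
    unfolding seminorm_top_def
    by (rule continuous_map_from_subtopology) (rule continuous_map_product_projection, simp)
  then have "openin (seminorm_top absK) {\<gamma>' \<in> topspace (seminorm_top absK). \<gamma>' v \<in> {\<gamma> v - \<eta> <..< \<gamma> v + \<eta>}}"
    by (rule openin_continuous_map_preimage) simp
  from openin_Int[OF this insert.IH] show ?case
    by (rule rev_iffD1) (intro arg_cong[where f = "openin _"], auto simp: abs_less_iff)
qed simp

lemma continuous_map_j_seminorm_apply:
  "continuous_map (seminorm_top absK) euclideanreal (\<lambda>\<gamma> :: ('n::finite \<Rightarrow> 'k) \<Rightarrow> real. j_seminorm \<gamma> f)"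
  unfolding Met_TC.continuous_map_to_metric[unfolded mtopology_is_euclidean mball_eq_ball]
proof (intro ballI allI impI)
  fix \<gamma> :: "('n \<Rightarrow> 'k) \<Rightarrow> real" and \<epsilon> :: real
  assume \<gamma>: "\<gamma> \<in> topspace (seminorm_top absK)" and "0 < \<epsilon>"
  then obtain F \<eta> where "finite F" "0 < \<eta>" and close: "\<And>\<gamma>'. seminorm0 absK \<gamma>' \<Longrightarrow>
      (\<forall>v\<in>F. \<bar>\<gamma>' v - \<gamma> v\<bar> < \<eta>) \<Longrightarrow> \<bar>j_seminorm \<gamma>' f - j_seminorm \<gamma> f\<bar> < \<epsilon>"
    using j_seminorm_locally_close[of \<gamma> \<epsilon> f] by (auto simp: seminorm_top_def seminorm_imp_seminorm0)
  let ?U = "{\<gamma>' \<in> topspace (seminorm_top absK). \<forall>v\<in>F. \<bar>\<gamma>' v - \<gamma> v\<bar> < \<eta>}"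
  have "openin (seminorm_top absK) ?U" by (rule openin_seminorm_top_close[OF \<open>finite F\<close>])
  moreover have "\<gamma> \<in> ?U" using \<gamma> \<open>0 < \<eta>\<close> by simp
  moreover have "j_seminorm \<gamma>' f \<in> ball (j_seminorm \<gamma> f) \<epsilon>" if "\<gamma>' \<in> ?U" for \<gamma>'
    using close[of \<gamma>'] that by (auto simp: seminorm_top_def seminorm_imp_seminorm0 dist_real_def abs_minus_commute)
  ultimately show "\<exists>U. openin (seminorm_top absK) U \<and> \<gamma> \<in> U \<and>
      (\<forall>\<gamma>'\<in>U. j_seminorm \<gamma>' f \<in> ball (j_seminorm \<gamma> f) \<epsilon>)" by blast
qed

lemma continuous_map_j_seminorm:
  "continuous_map (seminorm_top absK) (mult_seminorm_top absK) (j_seminorm :: (('n::finite \<Rightarrow> 'k) \<Rightarrow> real) \<Rightarrow> _)"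
  unfolding mult_seminorm_top_def
proof (rule continuous_map_into_subtopology)
  show "continuous_map (seminorm_top absK) (product_topology (\<lambda>_. euclideanreal) UNIV)
      (j_seminorm :: (('n \<Rightarrow> 'k) \<Rightarrow> real) \<Rightarrow> _)"
    unfolding continuous_map_componentwise_UNIV using continuous_map_j_seminorm_apply by blast
  show "j_seminorm \<in> topspace (seminorm_top absK) \<rightarrow> {\<alpha>. mult_seminorm absK \<alpha>}"
    using mult_seminorm_j_seminorm by (auto simp: seminorm_top_def)
qed

section \<open>Quotient spaces and the maps r and j\<close>

lemma mult_seminorm_add_power_le:
  fixes \<alpha> :: "('n::finite, 'k) sympoly \<Rightarrow> real"
  assumes "mult_seminorm absK \<alpha>"
  shows "\<alpha> (f + g) ^ n \<le> (real n + 1) * max (\<alpha> f) (\<alpha> g) ^ n"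
proof -
  have nonneg: "\<And>f. 0 \<le> \<alpha> f" and subadd: "\<And>f g. \<alpha> (f + g) \<le> \<alpha> f + \<alpha> g"
    and mult: "\<And>f g. \<alpha> (f * g) = \<alpha> f * \<alpha> g" and const: "\<And>c. \<alpha> (pconst c) = absK c"
    using assms unfolding mult_seminorm_def by auto
  have power: "\<alpha> (x ^ n) = \<alpha> x ^ n" for x n using const[of 1] by (induction n) (auto simp: mult)
  have "\<alpha> 0 = 0" using const[of 0] by simp
  have sum: "\<alpha> (sum F S) \<le> (\<Sum>s\<in>S. \<alpha> (F s))" for F and S :: "nat set"
  proof (induction S rule: infinite_finite_induct)
    case (insert s S)
    have "\<alpha> (sum F (insert s S)) \<le> \<alpha> (F s) + \<alpha> (sum F S)"
      using insert(1,2) subadd[of "F s" "sum F S"] by simp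
    then show ?case using insert by simp
  qed (simp_all add: \<open>\<alpha> 0 = 0\<close>)
  have of_nat: "\<alpha> (of_nat m) \<le> 1" for m
  proof -
    have "\<alpha> (of_nat m) = \<alpha> (pconst (of_nat m))" unfolding pconst_def by simp
    also have "\<dots> = absK (of_nat m)" by (rule const)
    finally show ?thesis using absK_of_nat_le_1 by simp
  qed
  define M where "M = max (\<alpha> f) (\<alpha> g)"
  have "0 \<le> M" unfolding M_def using nonneg[of f] by simp
  have "\<alpha> (f + g) ^ n = \<alpha> (\<Sum>k\<le>n. of_nat (n choose k) * f ^ k * g ^ (n - k))"
    unfolding power[symmetric] binomial_ring ..
  also have "\<dots> \<le> (\<Sum>k\<le>n. \<alpha> (of_nat (n choose k) * f ^ k * g ^ (n - k)))"
    by (rule sum)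
  also have "\<dots> \<le> (\<Sum>k\<le>n. M ^ n)"
  proof (rule sum_mono)
    fix k assume "k \<in> {..n}"
    have "\<alpha> (of_nat (n choose k) * f ^ k * g ^ (n - k)) = \<alpha> (of_nat (n choose k)) * \<alpha> f ^ k * \<alpha> g ^ (n - k)"
      by (simp only: mult power)
    also have "\<dots> \<le> 1 * M ^ k * M ^ (n - k)"
      using of_nat nonneg \<open>0 \<le> M\<close> unfolding M_def by (intro mult_mono power_mono) auto
    also have "\<dots> = M ^ n" using \<open>k \<in> {..n}\<close> by (simp flip: power_add)
    finally show "\<alpha> (of_nat (n choose k) * f ^ k * g ^ (n - k)) \<le> M ^ n" .
  qed
  also have "\<dots> = (real n + 1) * M ^ n" by simp
  finally show ?thesis unfolding M_def .
qed

lemma mult_seminorm_ultra: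
  assumes "mult_seminorm absK \<alpha>"
  shows "\<alpha> (f + g) \<le> max (\<alpha> f) (\<alpha> g)"
proof (rule le_if_power_le_linear_times_power)
  show "\<alpha> (f + g) ^ n \<le> (real n + 1) * max (\<alpha> f) (\<alpha> g) ^ n" for n
    by (rule mult_seminorm_add_power_le[OF assms])
  have "0 \<le> \<alpha> f" using assms unfolding mult_seminorm_def by blast
  then show "0 \<le> max (\<alpha> f) (\<alpha> g)" by simp
qed

lemma seminorm_comp_lin:
  assumes "mult_seminorm absK \<alpha>"
  shows "seminorm absK (\<alpha> \<circ> lin)"
  using assms mult_seminorm_ultra[OF assms]
  unfolding seminorm_def mult_seminorm_def o_def by (auto simp: lin_vsmul lin_vadd)

end

lemma istopology_quotient: "istopology (\<lambda>U. U \<subseteq> f ` topspace X \<and> openin X {x \<in> topspace X. f x \<in> U})"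
  unfolding istopology_def
proof (intro conjI; intro allI impI)
  fix S T assume "S \<subseteq> f ` topspace X \<and> openin X {x \<in> topspace X. f x \<in> S}"
    and "T \<subseteq> f ` topspace X \<and> openin X {x \<in> topspace X. f x \<in> T}"
  moreover have "{x \<in> topspace X. f x \<in> S \<inter> T} = {x \<in> topspace X. f x \<in> S} \<inter> {x \<in> topspace X. f x \<in> T}"
    by auto
  ultimately show "S \<inter> T \<subseteq> f ` topspace X \<and> openin X {x \<in> topspace X. f x \<in> S \<inter> T}"
    by (auto intro: openin_Int)
next
  fix K assume "\<forall>S\<in>K. S \<subseteq> f ` topspace X \<and> openin X {x \<in> topspace X. f x \<in> S}"
  moreover have "{x \<in> topspace X. f x \<in> \<Union>K} = (\<Union>S\<in>K. {x \<in> topspace X. f x \<in> S})" by auto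
  ultimately show "\<Union>K \<subseteq> f ` topspace X \<and> openin X {x \<in> topspace X. f x \<in> \<Union>K}"
    by (auto intro!: openin_Union)
qed

lemma openin_quotient_topology:
  "openin (quotient_topology X f) U \<longleftrightarrow> U \<subseteq> f ` topspace X \<and> openin X {x \<in> topspace X. f x \<in> U}"
  unfolding quotient_topology_def by (simp add: istopology_quotient)

lemma topspace_quotient_topology: "topspace (quotient_topology X f) = f ` topspace X"
proof -
  have "{x \<in> topspace X. f x \<in> f ` topspace X} = topspace X" by auto
  then have "openin (quotient_topology X f) (f ` topspace X)"
    unfolding openin_quotient_topology by simp
  then show ?thesis
    by (auto simp: topspace_def openin_quotient_topology dest: openin_subset)
qed

lemma quotient_map_quotient_topology: "quotient_map X (quotient_topology X f) f"
  unfolding quotient_map_def topspace_quotient_topology openin_quotient_topology by auto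

lemma seminorm_class_self: "seminorm absK \<gamma> \<Longrightarrow> \<gamma> \<in> seminorm_class absK \<gamma>"
  unfolding seminorm_class_def by (auto intro: exI[of _ 1])

lemma seminorm_class_scale:
  assumes "0 < c"
  shows "seminorm_class absK (\<lambda>x. c * \<gamma> x) = seminorm_class absK \<gamma>"
proof
  show "seminorm_class absK (\<lambda>x. c * \<gamma> x) \<subseteq> seminorm_class absK \<gamma>"
    unfolding seminorm_class_def using assms by (auto intro!: exI[of _ "_ * c"])
  show "seminorm_class absK \<gamma> \<subseteq> seminorm_class absK (\<lambda>x. c * \<gamma> x)"
    unfolding seminorm_class_def using assms by (auto intro!: exI[of _ "_ / c"])
qed

lemma mult_class_self: "mult_seminorm absK \<alpha> \<Longrightarrow> \<alpha> \<in> mult_class absK \<alpha>"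
  unfolding mult_class_def by (auto intro: exI[of _ 1])

lemma mult_class_eq:
  assumes "\<beta> \<in> mult_class absK \<alpha>"
  shows "mult_class absK \<beta> = mult_class absK \<alpha>"
proof -
  obtain c where c: "0 < c" "\<And>d f. homogeneous d f \<Longrightarrow> \<beta> f = c ^ d * \<alpha> f"
    using assms unfolding mult_class_def by blast
  show ?thesis
  proof
    show "mult_class absK \<beta> \<subseteq> mult_class absK \<alpha>"
      unfolding mult_class_def using c by (auto intro!: exI[of _ "_ * c"] simp: power_mult_distrib)
    have "\<alpha> f = (1 / c) ^ d * \<beta> f" if "homogeneous d f" for d f
      using c(2)[OF that] c(1) by (simp add: power_divide)
    then show "mult_class absK \<alpha> \<subseteq> mult_class absK \<beta>"
      unfolding mult_class_def using c(1) by (auto intro!: exI[of _ "_ / c"] simp: power_divide)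
  qed
qed

lemma topspace_S_top: "topspace (S_top absK) = seminorm_class absK ` {\<gamma>. seminorm absK \<gamma>}"
  unfolding S_top_def topspace_quotient_topology seminorm_top_def by simp

context local_field
begin

lemma continuous_map_comp_lin:
  "continuous_map (mult_seminorm_top absK) (seminorm_top absK) (\<lambda>\<alpha> :: ('n::finite, 'k) sympoly \<Rightarrow> real. \<alpha> \<circ> lin)"
  unfolding seminorm_top_def
proof (rule continuous_map_into_subtopology)
  show "continuous_map (mult_seminorm_top absK) (product_topology (\<lambda>_. euclideanreal) UNIV)
      (\<lambda>\<alpha> :: ('n, 'k) sympoly \<Rightarrow> real. \<alpha> \<circ> lin)"
    unfolding continuous_map_componentwise_UNIV o_def mult_seminorm_top_def
    by (intro allI continuous_map_from_subtopology continuous_map_product_projection) simp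
  show "(\<lambda>\<alpha>. \<alpha> \<circ> lin) \<in> topspace (mult_seminorm_top absK) \<rightarrow> {\<gamma>. seminorm absK \<gamma>}"
    using seminorm_comp_lin by (auto simp: mult_seminorm_top_def)
qed

lemma r_map_mult_class:
  assumes "mult_seminorm absK \<alpha>"
  shows "r_map absK (mult_class absK \<alpha>) = seminorm_class absK (\<alpha> \<circ> lin)"
proof -
  have "seminorm_class absK (\<beta> \<circ> lin) = seminorm_class absK (\<alpha> \<circ> lin)"
    if \<beta>: "\<beta> \<in> mult_class absK \<alpha>" for \<beta>
  proof -
    obtain c where "0 < c" "\<And>d f. homogeneous d f \<Longrightarrow> \<beta> f = c ^ d * \<alpha> f"
      using \<beta> unfolding mult_class_def by blast
    then have "\<beta> \<circ> lin = (\<lambda>x. c * (\<alpha> \<circ> lin) x)" using homogeneous_lin by fastforce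
    then show ?thesis by (simp only: seminorm_class_scale[OF \<open>0 < c\<close>])
  qed
  then show ?thesis using mult_class_self[OF assms] unfolding r_map_def by blast
qed

lemma j_map_seminorm_class:
  assumes "seminorm absK \<gamma>"
  shows "j_map absK (seminorm_class absK \<gamma>) = mult_class absK (j_seminorm \<gamma>)"
proof -
  have \<gamma>: "seminorm0 absK \<gamma>" by (rule seminorm_imp_seminorm0[OF assms])
  have "mult_class absK (j_rep absK \<gamma>' w) = mult_class absK (j_seminorm \<gamma>)"
    if mem: "\<gamma>' \<in> seminorm_class absK \<gamma>" and w: "canonical_wrt absK \<gamma>' w" for \<gamma>' w
  proof -
    obtain c where \<gamma>': "seminorm absK \<gamma>'" and "0 < c" and "\<gamma>' = (\<lambda>x. c * \<gamma> x)"
      using mem unfolding seminorm_class_def by blast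
    then have "j_rep absK \<gamma>' w = j_seminorm \<gamma>'"
      using j_seminorm_eq_j_rep[OF seminorm_imp_seminorm0[OF \<gamma>'] w] by simp
    moreover have "j_seminorm \<gamma>' \<in> mult_class absK (j_seminorm \<gamma>)"
      unfolding mult_class_def
      using mult_seminorm_j_seminorm[OF \<gamma>'] \<open>0 < c\<close> j_seminorm_scale[OF \<gamma>] \<open>\<gamma>' = (\<lambda>x. c * \<gamma> x)\<close> by auto
    ultimately show ?thesis using mult_class_eq by simp
  qed
  moreover have "\<gamma> \<in> seminorm_class absK \<gamma>" "canonical_wrt absK \<gamma> (adapted_basis \<gamma>)"
    using seminorm_class_self[OF assms] adapted_basis(1)[OF \<gamma>] by simp_all
  ultimately show ?thesis unfolding j_map_def by blast
qed

lemma r_map_j_map: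
  assumes "C \<in> topspace (S_top absK)"
  shows "r_map absK (j_map absK C :: (('n::finite, 'k) sympoly \<Rightarrow> real) set) = C"
proof -
  obtain \<gamma> where \<gamma>: "seminorm absK \<gamma>" and C: "C = seminorm_class absK \<gamma>"
    using assms unfolding topspace_S_top by blast
  have "j_seminorm \<gamma> \<circ> lin = \<gamma>"
    using j_seminorm_lin[OF seminorm_imp_seminorm0[OF \<gamma>]] by auto
  then show ?thesis
    unfolding C j_map_seminorm_class[OF \<gamma>] r_map_mult_class[OF mult_seminorm_j_seminorm[OF \<gamma>]] by simp
qed

lemma continuous_map_r_map:
  "continuous_map (Pan_top absK) (S_top absK) (r_map absK :: (('n::finite, 'k) sympoly \<Rightarrow> real) set \<Rightarrow> _)"
  unfolding Pan_top_def S_top_def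
  by (rule continuous_compose_quotient_map[OF quotient_map_quotient_topology],
      rule continuous_map_eq[OF continuous_map_compose[OF continuous_map_comp_lin
          quotient_imp_continuous_map[OF quotient_map_quotient_topology]]])
    (simp add: r_map_mult_class mult_seminorm_top_def)

lemma continuous_map_j_map:
  "continuous_map (S_top absK) (Pan_top absK) (j_map absK :: _ \<Rightarrow> (('n::finite, 'k) sympoly \<Rightarrow> real) set)"
  unfolding Pan_top_def S_top_def
  by (rule continuous_compose_quotient_map[OF quotient_map_quotient_topology],
      rule continuous_map_eq[OF continuous_map_compose[OF continuous_map_j_seminorm
          quotient_imp_continuous_map[OF quotient_map_quotient_topology]]])
    (simp add: j_map_seminorm_class seminorm_top_def)

lemma homeomorphic_map_j_map:
  "homeomorphic_map (S_top absK) (subtopology (Pan_top absK) (j_map absK ` topspace (S_top absK)))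
     (j_map absK :: _ \<Rightarrow> (('n::finite, 'k) sympoly \<Rightarrow> real) set)"
  unfolding homeomorphic_map_maps homeomorphic_maps_def
  using continuous_map_j_map continuous_map_r_map r_map_j_map
  by (intro exI[of _ "r_map absK"] conjI continuous_map_into_subtopology continuous_map_from_subtopology)
    (auto simp: topspace_subtopology)

lemma mult_class_in_j_map_image_iff:
  assumes "mult_seminorm absK (\<alpha> :: ('n::finite, 'k) sympoly \<Rightarrow> real)"
  shows "mult_class absK \<alpha> \<in> j_map absK ` topspace (S_top absK) \<longleftrightarrow>
    (\<forall>d f. homogeneous d f \<longrightarrow> \<alpha> f = j_seminorm (\<alpha> \<circ> lin) f)"
proof
  assume "mult_class absK \<alpha> \<in> j_map absK ` topspace (S_top absK)"
  then obtain \<gamma> where \<gamma>: "seminorm absK \<gamma>" and "mult_class absK \<alpha> = mult_class absK (j_seminorm \<gamma>)"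
    unfolding topspace_S_top using j_map_seminorm_class by auto
  then have "\<alpha> \<in> mult_class absK (j_seminorm \<gamma>)" using mult_class_self[OF assms] by simp
  then obtain c where "0 < c" and c: "\<And>d f. homogeneous d f \<Longrightarrow> \<alpha> f = c ^ d * j_seminorm \<gamma> f"
    unfolding mult_class_def by blast
  have \<gamma>0: "seminorm0 absK \<gamma>" by (rule seminorm_imp_seminorm0[OF \<gamma>])
  have "\<alpha> \<circ> lin = (\<lambda>x. c * \<gamma> x)" using c[OF homogeneous_lin] j_seminorm_lin[OF \<gamma>0] by auto
  then show "\<forall>d f. homogeneous d f \<longrightarrow> \<alpha> f = j_seminorm (\<alpha> \<circ> lin) f"
    using c j_seminorm_scale[OF \<gamma>0 less_imp_le[OF \<open>0 < c\<close>]] by simp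
next
  assume eq: "\<forall>d f. homogeneous d f \<longrightarrow> \<alpha> f = j_seminorm (\<alpha> \<circ> lin) f"
  have \<gamma>: "seminorm absK (\<alpha> \<circ> lin)" by (rule seminorm_comp_lin[OF assms])
  have "\<alpha> \<in> mult_class absK (j_seminorm (\<alpha> \<circ> lin))"
    unfolding mult_class_def using assms eq by (auto intro!: exI[of _ 1])
  then have "mult_class absK \<alpha> = j_map absK (seminorm_class absK (\<alpha> \<circ> lin))"
    unfolding j_map_seminorm_class[OF \<gamma>] by (rule mult_class_eq)
  then show "mult_class absK \<alpha> \<in> j_map absK ` topspace (S_top absK)"
    unfolding topspace_S_top using \<gamma> by auto
qed

lemma closedin_j_seminorm_restriction_fixed:
  "closedin (mult_seminorm_top absK) {\<alpha> :: ('n::finite, 'k) sympoly \<Rightarrow> real.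
     \<alpha> \<in> topspace (mult_seminorm_top absK) \<and> (\<forall>d f. homogeneous d f \<longrightarrow> \<alpha> f = j_seminorm (\<alpha> \<circ> lin) f)}"
proof -
  let ?P = "mult_seminorm_top absK :: (('n, 'k) sympoly \<Rightarrow> real) topology"
  have "closedin ?P {\<alpha> \<in> topspace ?P. \<alpha> f = j_seminorm (\<alpha> \<circ> lin) f}" for f
  proof (rule closedin_continuous_maps_eq[OF Hausdorff_space_euclidean])
    show "continuous_map ?P euclideanreal (\<lambda>\<alpha>. \<alpha> f)"
      unfolding mult_seminorm_top_def
      by (rule continuous_map_from_subtopology) (rule continuous_map_product_projection, simp)
    show "continuous_map ?P euclideanreal (\<lambda>\<alpha>. j_seminorm (\<alpha> \<circ> lin) f)"
      using continuous_map_compose[OF continuous_map_comp_lin continuous_map_j_seminorm_apply[of f]]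
      by (simp add: o_def)
  qed
  then have "closedin ?P (topspace ?P \<inter> (\<Inter>f\<in>{f. \<exists>d. homogeneous d f}.
      {\<alpha> \<in> topspace ?P. \<alpha> f = j_seminorm (\<alpha> \<circ> lin) f}))"
    using homogeneous_0 by (intro closedin_Int closedin_Inter closedin_topspace) auto
  then show ?thesis by (rule rev_iffD1) (intro arg_cong[where f = "closedin ?P"], blast)
qed

lemma closedin_j_map_image:
  "closedin (Pan_top absK) ((j_map absK :: _ \<Rightarrow> (('n::finite, 'k) sympoly \<Rightarrow> real) set) ` topspace (S_top absK))"
proof -
  let ?P = "mult_seminorm_top absK :: (('n, 'k) sympoly \<Rightarrow> real) topology"
  have "{\<alpha> \<in> topspace ?P. mult_class absK \<alpha> \<in> j_map absK ` topspace (S_top absK)} =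
      {\<alpha> \<in> topspace ?P. \<forall>d f. homogeneous d f \<longrightarrow> \<alpha> f = j_seminorm (\<alpha> \<circ> lin) f}"
    using mult_class_in_j_map_image_iff by (auto simp: mult_seminorm_top_def)
  moreover have "j_map absK ` topspace (S_top absK) \<subseteq> topspace (Pan_top absK)"
    using continuous_map_j_map continuous_map_image_subset_topspace by blast
  ultimately show ?thesis
    using quotient_map_quotient_topology[of ?P "mult_class absK"] closedin_j_seminorm_restriction_fixed
    unfolding Pan_top_def quotient_map_closedin by auto
qed

end

theorem proposition6p1:
  fixes absK :: "'k::field \<Rightarrow> real"
    and r :: "(('n::finite, 'k) sympoly \<Rightarrow> real) set \<Rightarrow> (('n \<Rightarrow> 'k) \<Rightarrow> real) set"
    and j :: "(('n \<Rightarrow> 'k) \<Rightarrow> real) set \<Rightarrow> (('n, 'k) sympoly \<Rightarrow> real) set"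
  assumes "nonarch_local_field absK"
    and "r = r_map absK"
    and "j = j_map absK"
  shows "continuous_map (Pan_top absK) (S_top absK) r
       \<and> continuous_map (S_top absK) (Pan_top absK) j
       \<and> (\<forall>C \<in> topspace (S_top absK). r (j C) = C)
       \<and> homeomorphic_map (S_top absK) (subtopology (Pan_top absK) (j ` topspace (S_top absK))) j
       \<and> closedin (Pan_top absK) (j ` topspace (S_top absK))"
proof -
  interpret local_field absK by (rule local_field.intro) (rule assms(1))
  show ?thesis
    unfolding assms(2,3)
    using continuous_map_r_map continuous_map_j_map r_map_j_map homeomorphic_map_j_map closedin_j_map_image
    by blast
qed

end
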